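(* Let $f_0,f_1:X\to\mathbb{R}$ be Morse functions, $\{m^0_{x,y}\}$, $\{m^1_{x',y'}\}$ twisting cocycles for $f_0$, $f_1$, and let $\{\tau_{x,y'}\}$, $\{\tau'_{x,y'}\}$ ($\tau_{x,y'},\tau'_{x,y'}\in C_{|x|-|y'|}(\Omega X)$, $x\in\mathrm{Crit}(f_0)$, $y'\in\mathrm{Crit}(f_1)$) both satisfy $\partial\tau_{x,y'}=\sum_z m^0_{x,z}\tau_{z,y'}-\sum_{w'}(-1)^{|x|-|w'|}\tau_{x,w'}m^1_{w',y'}$; let $\Psi,\Psi'$ be the associated morphisms $C_*(X,m^0,\mathcal{F})\to C_*(X,m^1,\mathcal{F})$, $\Psi=\sum_{n\ge1}\sum_{u=1}^n(-1)^{u-1}(\nu_{n+1}\otimes1)\tilde{\mathbf m}_{(1)}^{n-u}\tilde{\boldsymbol\tau}\tilde{\mathbf m}_{(0)}^{u-1}$ (and likewise $\Psi'$ with $\tau'$), for an $\mathcal{A}_\infty$-module $\mathcal{F}$ over $C_*(\Omega X)$. Suppose there is a family $\{h_{x,y'}\in C_{|x|-|y'|+1}(\Omega X)\}$ with $$\partial h_{x,y'}=\tau_{x,y'}-\tau'_{x,y'}+\sum_{z\in\mathrm{Crit}(f_0)}(-1)^{|x|-|z|}m^0_{x,z}h_{z,y'}+\sum_{w'\in\mathrm{Crit}(f_1)}(-1)^{|x|-|w'|}h_{x,w'}m^1_{w',y'}.$$ Then $H=\sum_{n\ge1}\sum_{u=1}^n(\nu_{n+1}\otimes1)\tilde{\mathbf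 m}_{(1)}^{n-u}\tilde{\boldsymbol h}\tilde{\mathbf m}_{(0)}^{u-1}:C_*(X,m^0,\mathcal{F})\to C_{*+1}(X,m^1,\mathcal{F})$ is a chain homotopy between $\Psi$ and $\Psi'$.
   Context: $C_*(\Omega X)$: cubical chains on Moore based loops, an $\mathcal{A}_\infty$-algebra with $\mu_1$ the differential, $\mu_2$ the Pontryagin product, $\mu_i=0$ for $i\ge3$; Koszul sign rule throughout. Twisting cocycles satisfy $\partial m_{x,y}=\sum_z(-1)^{|x|-|z|}m_{x,z}m_{z,y}$, $m_{x,y}\in C_{|x|-|y|-1}(\Omega X)$. $(\mathcal{F},\nu_n)$ is an $\mathcal{A}_\infty$-module: $\nu_n:\mathcal{F}\otimes C_*(\Omega X)^{\otimes n-1}\to\mathcal{F}$ of degree $n-2$ with $\sum_{s+t=N,s\ge1}(-1)^{st}\nu_{t+1}(\nu_s\otimes1^{\otimes t})+\sum_{r+s+t=N,r,s\ge1}(-1)^{r+st}\nu_{r+t+1}(1^{\otimes r}\otimes\mu_s\otimes1^{\otimes t})=0$. For a family $c=\{c_{x,y}\}$ indexed by critical points, $\mathbf c(x)=\sum_y c_{x,y}\otimes y$ and $\tilde{\mathbf c}(\alpha\otimes\gamma_1\otimes\cdots\otimes\gamma_k\otimes x)=(1^{\otimes k+1}\otimes\mathbf c)(\alpha\otimes\gamma_1\otimes\cdots\otimes\gamma_k\otimes x)$; this defines $\tilde{\mathbf m}_{(0)},\tilde{\mathbf m}_{(1)}$ (from $m^0,m^1$), $\tilde{\boldsymbol\tau}$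 and $\tilde{\boldsymbol h}$ (degree $1$). $C_*(X,m^i,\mathcal{F})=\mathcal{F}\otimes\mathbb{Z}\mathrm{Crit}(f_i)$ with differential $\sum_{n\ge0}(\nu_{n+1}\otimes1)\tilde{\mathbf m}_{(i)}^n$. *)

theory Defs
  imports Main
begin

definition sgnz :: "int \<Rightarrow> 'g::ab_group_add \<Rightarrow> 'g" where
  "sgnz k v = (if even k then v else - v)"

definition graded_group :: "(int \<Rightarrow> 'g::ab_group_add set) \<Rightarrow> bool" where
  "graded_group g \<longleftrightarrow>
     (\<forall>q. 0 \<in> g q \<and> (\<forall>a\<in>g q. \<forall>b\<in>g q. a + b \<in> g q) \<and> (\<forall>a\<in>g q. - a \<in> g q)) \<and>
     (\<forall>p q. p \<noteq> q \<longrightarrow> g p \<inter> g q \<subseteq> {0})"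

definition homog_list :: "(int \<Rightarrow> 'a set) \<Rightarrow> 'a list \<Rightarrow> int list \<Rightarrow> bool" where
  "homog_list g xs qs \<longleftrightarrow> length xs = length qs \<and> (\<forall>i<length xs. xs ! i \<in> g (qs ! i))"

section \<open>The A-infinity structure of C_*(Omega X): mu_1 = d, mu_2 = product, mu_i = 0 (i >= 3)\<close>

definition mu :: "('a \<Rightarrow> 'a) \<Rightarrow> ('a \<Rightarrow> 'a \<Rightarrow> 'a) \<Rightarrow> nat \<Rightarrow> 'a list \<Rightarrow> 'a::zero" where
  "mu dA mul s xs = (if s = 1 then dA (xs ! 0) else if s = 2 then mul (xs ! 0) (xs ! 1) else 0)"

definition ainf_alg :: "(int \<Rightarrow> 'a::ab_group_add set) \<Rightarrow> ('a \<Rightarrow> 'a) \<Rightarrow> ('a \<Rightarrow> 'a \<Rightarrow> 'a) \<Rightarrow> bool" where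
  "ainf_alg gA dA mul \<longleftrightarrow>
     graded_group gA \<and>
     (\<forall>a b. dA (a + b) = dA a + dA b) \<and>
     (\<forall>a b c. mul (a + b) c = mul a c + mul b c) \<and>
     (\<forall>a b c. mul a (b + c) = mul a b + mul a c) \<and>
     (\<forall>q. \<forall>a\<in>gA q. dA a \<in> gA (q - 1)) \<and>
     (\<forall>p q. \<forall>a\<in>gA p. \<forall>b\<in>gA q. mul a b \<in> gA (p + q)) \<and>
     (\<forall>N\<ge>1. \<forall>xs qs. homog_list gA xs qs \<and> length xs = N \<longrightarrow>
        (\<Sum>r<N. \<Sum>s\<in>{1..N - r}.
           sgnz (int r + int s * int (N - r - s) + (int s - 2) * sum_list (take r qs))
             (mu dA mul (r + 1 + (N - r - s))
                (take r xs @ [mu dA mul s (take s (drop r xs))] @ drop (r + s) xs))) = 0)"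

text \<open>An A-infinity module (F, nu_n) over (A, mu): nu n alpha [g_1,...,g_(n-1)] stands for
  nu_n(alpha (x) g_1 (x) ... (x) g_(n-1)), of degree n - 2, multilinear.\<close>
definition ainf_module ::
  "(int \<Rightarrow> 'a::ab_group_add set) \<Rightarrow> ('a \<Rightarrow> 'a) \<Rightarrow> ('a \<Rightarrow> 'a \<Rightarrow> 'a) \<Rightarrow>
   (int \<Rightarrow> 'f::ab_group_add set) \<Rightarrow> (nat \<Rightarrow> 'f \<Rightarrow> 'a list \<Rightarrow> 'f) \<Rightarrow> bool" where
  "ainf_module gA dA mul gF nu \<longleftrightarrow>
     graded_group gF \<and>
     (\<forall>n a b gs. nu n (a + b) gs = nu n a gs + nu n b gs) \<and>
     (\<forall>n a gs i x y. i < length gs \<longrightarrow>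
        nu n a (gs[i := x + y]) = nu n a (gs[i := x]) + nu n a (gs[i := y])) \<and>
     (\<forall>n\<ge>1. \<forall>a p gs qs. a \<in> gF p \<and> homog_list gA gs qs \<and> length gs = n - 1 \<longrightarrow>
        nu n a gs \<in> gF (p + sum_list qs + int n - 2)) \<and>
     (\<forall>N\<ge>1. \<forall>a p gs qs. a \<in> gF p \<and> homog_list gA gs qs \<and> length gs = N - 1 \<longrightarrow>
        (\<Sum>s\<in>{1..N}. sgnz (int s * int (N - s))
            (nu (N - s + 1) (nu s a (take (s - 1) gs)) (drop (s - 1) gs)))
      + (\<Sum>r\<in>{1..N}. \<Sum>s\<in>{1..N - r}.
           sgnz (int r + int s * int (N - r - s) + (int s - 2) * (p + sum_list (take (r - 1) qs)))
             (nu (r + (N - r - s) + 1) a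
                (take (r - 1) gs @ [mu dA mul s (take s (drop (r - 1) gs))] @ drop (r - 1 + s) gs)))
        = 0)"


definition twisting_cocycle ::
  "(int \<Rightarrow> 'a::ab_group_add set) \<Rightarrow> ('a \<Rightarrow> 'a) \<Rightarrow> ('a \<Rightarrow> 'a \<Rightarrow> 'a) \<Rightarrow>
   'c set \<Rightarrow> ('c \<Rightarrow> nat) \<Rightarrow> ('c \<Rightarrow> 'c \<Rightarrow> 'a) \<Rightarrow> bool" where
  "twisting_cocycle gA dA mul C ind m \<longleftrightarrow>
     (\<forall>x\<in>C. \<forall>y\<in>C. m x y \<in> gA (int (ind x) - int (ind y) - 1)) \<and>
     (\<forall>x\<in>C. \<forall>y\<in>C. dA (m x y) =
        (\<Sum>z\<in>C. sgnz (int (ind x) - int (ind z)) (mul (m x z) (m z y))))"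

definition tau_family ::
  "(int \<Rightarrow> 'a::ab_group_add set) \<Rightarrow> ('a \<Rightarrow> 'a) \<Rightarrow> ('a \<Rightarrow> 'a \<Rightarrow> 'a) \<Rightarrow>
   'c set \<Rightarrow> ('c \<Rightarrow> nat) \<Rightarrow> ('c \<Rightarrow> 'c \<Rightarrow> 'a) \<Rightarrow>
   'd set \<Rightarrow> ('d \<Rightarrow> nat) \<Rightarrow> ('d \<Rightarrow> 'd \<Rightarrow> 'a) \<Rightarrow> ('c \<Rightarrow> 'd \<Rightarrow> 'a) \<Rightarrow> bool" where
  "tau_family gA dA mul C0 ind0 m0 C1 ind1 m1 tau \<longleftrightarrow>
     (\<forall>x\<in>C0. \<forall>y\<in>C1. tau x y \<in> gA (int (ind0 x) - int (ind1 y))) \<and>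
     (\<forall>x\<in>C0. \<forall>y\<in>C1. dA (tau x y) =
        (\<Sum>z\<in>C0. mul (m0 x z) (tau z y))
        - (\<Sum>w\<in>C1. sgnz (int (ind0 x) - int (ind1 w)) (mul (tau x w) (m1 w y))))"

definition homotopy_family ::
  "(int \<Rightarrow> 'a::ab_group_add set) \<Rightarrow> ('a \<Rightarrow> 'a) \<Rightarrow> ('a \<Rightarrow> 'a \<Rightarrow> 'a) \<Rightarrow>
   'c set \<Rightarrow> ('c \<Rightarrow> nat) \<Rightarrow> ('c \<Rightarrow> 'c \<Rightarrow> 'a) \<Rightarrow>
   'd set \<Rightarrow> ('d \<Rightarrow> nat) \<Rightarrow> ('d \<Rightarrow> 'd \<Rightarrow> 'a) \<Rightarrow>
   ('c \<Rightarrow> 'd \<Rightarrow> 'a) \<Rightarrow> ('c \<Rightarrow> 'd \<Rightarrow> 'a) \<Rightarrow> ('c \<Rightarrow> 'd \<Rightarrow> 'a) \<Rightarrow> bool" where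
  "homotopy_family gA dA mul C0 ind0 m0 C1 ind1 m1 tau tau' h \<longleftrightarrow>
     (\<forall>x\<in>C0. \<forall>y\<in>C1. h x y \<in> gA (int (ind0 x) - int (ind1 y) + 1)) \<and>
     (\<forall>x\<in>C0. \<forall>y\<in>C1. dA (h x y) =
        tau x y - tau' x y
        + (\<Sum>z\<in>C0. sgnz (int (ind0 x) - int (ind0 z)) (mul (m0 x z) (h z y)))
        + (\<Sum>w\<in>C1. sgnz (int (ind0 x) - int (ind1 w)) (mul (h x w) (m1 w y))))"

text \<open>A pure tensor alpha (x) g_1 (x) ... (x) g_k (x) x, each factor recorded with its degree;
  a formal sum is a list of signed pure tensors (True = +1, False = -1).\<close>
type_synonym ('f, 'a, 'c) ptensor = "('f \<times> int) \<times> ('a \<times> int) list \<times> 'c"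
type_synonym ('f, 'a, 'c) ftensor = "(bool \<times> ('f, 'a, 'c) ptensor) list"

text \<open>c-tilde = 1^(k+1) (x) c, where c(x) = sum_y c_(x,y) (x) y has degree e, so c_(x,y) has
  degree |x| - |y| + e; Koszul sign (-1)^(e (|alpha| + sum |g_i|)).\<close>
definition ctilde :: "int \<Rightarrow> ('c \<Rightarrow> nat) \<Rightarrow> ('d \<Rightarrow> nat) \<Rightarrow> 'd::linorder set \<Rightarrow> ('c \<Rightarrow> 'd \<Rightarrow> 'a) \<Rightarrow>
    ('f, 'a, 'c) ftensor \<Rightarrow> ('f, 'a, 'd) ftensor" where
  "ctilde e ic jd D c ws = concat (map (\<lambda>(s, ap, gs, x).
      map (\<lambda>y. (s = even (e * (snd ap + sum_list (map snd gs))),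
                (ap, gs @ [(c x y, int (ic x) - int (jd y) + e)], y)))
          (sorted_list_of_set D)) ws)"

text \<open>(nu_(n+1) (x) 1) applied to a formal sum, read off at the generator y.\<close>
definition nu_eval :: "(nat \<Rightarrow> 'f::ab_group_add \<Rightarrow> 'a list \<Rightarrow> 'f) \<Rightarrow> ('f, 'a, 'd) ftensor \<Rightarrow> 'd \<Rightarrow> 'f" where
  "nu_eval nu ws y = sum_list (map (\<lambda>(s, ap, gs, y').
      if y' = y then (if s then nu (Suc (length gs)) (fst ap) (map fst gs)
                      else - nu (Suc (length gs)) (fst ap) (map fst gs)) else 0) ws)"

definition gen :: "'f \<Rightarrow> int \<Rightarrow> 'c \<Rightarrow> ('f, 'a, 'c) ftensor" where
  "gen a p x = [(True, ((a, p), [], x))]"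

definition fsum :: "(nat \<Rightarrow> 'g::comm_monoid_add) \<Rightarrow> 'g" where
  "fsum a = sum a {n. a n \<noteq> 0}"

text \<open>Elements of C_N(X,m,F): functions phi : Crit -> F with phi x in F_(N - |x|)
  (phi stands for sum_x phi(x) (x) x).\<close>
definition chain_el :: "(int \<Rightarrow> 'f set) \<Rightarrow> 'c set \<Rightarrow> ('c \<Rightarrow> nat) \<Rightarrow> int \<Rightarrow> ('c \<Rightarrow> 'f) \<Rightarrow> bool" where
  "chain_el gF C ind N phi \<longleftrightarrow> (\<forall>x\<in>C. phi x \<in> gF (N - int (ind x)))"

text \<open>Linear extension of a map given on generators alpha (x) x (alpha of degree p).\<close>
definition lin_ext :: "'c set \<Rightarrow> ('c \<Rightarrow> nat) \<Rightarrow> (int \<Rightarrow> 'f \<Rightarrow> 'c \<Rightarrow> 'd \<Rightarrow> 'f::ab_group_add) \<Rightarrow>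
    int \<Rightarrow> ('c \<Rightarrow> 'f) \<Rightarrow> ('d \<Rightarrow> 'f)" where
  "lin_ext C ind g N phi = (\<lambda>y. \<Sum>x\<in>C. g (N - int (ind x)) (phi x) x y)"

definition twisted_diff :: "(nat \<Rightarrow> 'f::ab_group_add \<Rightarrow> 'a list \<Rightarrow> 'f) \<Rightarrow> 'c::linorder set \<Rightarrow> ('c \<Rightarrow> nat) \<Rightarrow>
    ('c \<Rightarrow> 'c \<Rightarrow> 'a) \<Rightarrow> int \<Rightarrow> ('c \<Rightarrow> 'f) \<Rightarrow> ('c \<Rightarrow> 'f)" where
  "twisted_diff nu C ind m = lin_ext C ind (\<lambda>p a x y.
      fsum (\<lambda>n. nu_eval nu ((ctilde (-1) ind ind C m ^^ n) (gen a p x)) y))"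

definition Psi_map :: "(nat \<Rightarrow> 'f::ab_group_add \<Rightarrow> 'a list \<Rightarrow> 'f) \<Rightarrow>
    'c::linorder set \<Rightarrow> ('c \<Rightarrow> nat) \<Rightarrow> ('c \<Rightarrow> 'c \<Rightarrow> 'a) \<Rightarrow>
    'd::linorder set \<Rightarrow> ('d \<Rightarrow> nat) \<Rightarrow> ('d \<Rightarrow> 'd \<Rightarrow> 'a) \<Rightarrow> ('c \<Rightarrow> 'd \<Rightarrow> 'a) \<Rightarrow>
    int \<Rightarrow> ('c \<Rightarrow> 'f) \<Rightarrow> ('d \<Rightarrow> 'f)" where
  "Psi_map nu C0 ind0 m0 C1 ind1 m1 tau = lin_ext C0 ind0 (\<lambda>p a x y.
      fsum (\<lambda>n. \<Sum>u\<in>{1..n}. sgnz (int u - 1)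
        (nu_eval nu ((ctilde (-1) ind1 ind1 C1 m1 ^^ (n - u))
           (ctilde 0 ind0 ind1 C1 tau ((ctilde (-1) ind0 ind0 C0 m0 ^^ (u - 1)) (gen a p x)))) y)))"

definition H_map :: "(nat \<Rightarrow> 'f::ab_group_add \<Rightarrow> 'a list \<Rightarrow> 'f) \<Rightarrow>
    'c::linorder set \<Rightarrow> ('c \<Rightarrow> nat) \<Rightarrow> ('c \<Rightarrow> 'c \<Rightarrow> 'a) \<Rightarrow>
    'd::linorder set \<Rightarrow> ('d \<Rightarrow> nat) \<Rightarrow> ('d \<Rightarrow> 'd \<Rightarrow> 'a) \<Rightarrow> ('c \<Rightarrow> 'd \<Rightarrow> 'a) \<Rightarrow>
    int \<Rightarrow> ('c \<Rightarrow> 'f) \<Rightarrow> ('d \<Rightarrow> 'f)" where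
  "H_map nu C0 ind0 m0 C1 ind1 m1 h = lin_ext C0 ind0 (\<lambda>p a x y.
      fsum (\<lambda>n. \<Sum>u\<in>{1..n}.
        nu_eval nu ((ctilde (-1) ind1 ind1 C1 m1 ^^ (n - u))
           (ctilde 1 ind0 ind1 C1 h ((ctilde (-1) ind0 ind0 C0 m0 ^^ (u - 1)) (gen a p x)))) y))"

definition chain_homotopy :: "(int \<Rightarrow> 'f::ab_group_add set) \<Rightarrow> 'c set \<Rightarrow> ('c \<Rightarrow> nat) \<Rightarrow> 'd set \<Rightarrow> ('d \<Rightarrow> nat) \<Rightarrow>
    (int \<Rightarrow> ('c \<Rightarrow> 'f) \<Rightarrow> ('c \<Rightarrow> 'f)) \<Rightarrow> (int \<Rightarrow> ('d \<Rightarrow> 'f) \<Rightarrow> ('d \<Rightarrow> 'f)) \<Rightarrow>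
    (int \<Rightarrow> ('c \<Rightarrow> 'f) \<Rightarrow> ('d \<Rightarrow> 'f)) \<Rightarrow> (int \<Rightarrow> ('c \<Rightarrow> 'f) \<Rightarrow> ('d \<Rightarrow> 'f)) \<Rightarrow>
    (int \<Rightarrow> ('c \<Rightarrow> 'f) \<Rightarrow> ('d \<Rightarrow> 'f)) \<Rightarrow> bool" where
  "chain_homotopy gF C0 ind0 C1 ind1 d0 d1 Psi Psi' H \<longleftrightarrow>
     (\<forall>N phi. chain_el gF C0 ind0 N phi \<longrightarrow>
        chain_el gF C1 ind1 (N + 1) (H N phi) \<and>
        (\<forall>y\<in>C1. Psi N phi y - Psi' N phi y = d1 (N + 1) (H N phi) y + H (N - 1) (d0 N phi) y))"

end

(* Put m^0, h and m^1 together into one upper triangular family M = [[m^0, h], [0, m^1]] on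
   Crit(f_0) + Crit(f_1), with the indices of Crit(f_0) raised by two so that h has the degree of
   a twisting cocycle entry. For an arbitrary family M of the right degrees, the A-infinity module
   relations (with mu_1 = d and mu_2 the product) express the square of the twisted operator
   D_M = sum_n (nu_(n+1) (x) 1) M~^n through the curvature dM - M M of M:
     D_M^2 = sum_(i,j) (-1)^i (nu (x) 1) M~^i (dM - M M)~ M~^j.
   Since m^0 and m^1 are twisting cocycles, the curvature of the combined family vanishes except on
   the off-diagonal block, where the equation satisfied by h makes it tau - tau'. The block of
   D_M^2 from Crit(f_0) to Crit(f_1) is d_1 H + H d_0 on the left and Psi - Psi' on the right. *)

theory Submission
  imports Defs
begin

lemma sgnz_0 [simp]: "sgnz 0 v = v"
  by (simp add: sgnz_def)

lemma sgnz_zero [simp]: "sgnz k 0 = (0::'g::ab_group_add)"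
  by (simp add: sgnz_def)

lemma sgnz_add: "sgnz k (v + w) = sgnz k v + sgnz k w"
  by (simp add: sgnz_def)

lemma sgnz_diff: "sgnz k (v - w) = sgnz k v - sgnz k w"
  by (simp add: sgnz_def)

lemma sgnz_sgnz: "sgnz k (sgnz l v) = sgnz (k + l) v"
  by (auto simp add: sgnz_def)

lemma sgnz_sum: "sgnz k (sum f A) = (\<Sum>x\<in>A. sgnz k (f x))"
  by (simp add: sgnz_def sum_negf)

lemma sgnz_if_zero: "sgnz k (if b then v else 0) = (if b then sgnz k v else 0)"
  by simp

lemma sgnz_cong_even: "even (k - l) \<Longrightarrow> v = w \<Longrightarrow> sgnz k v = sgnz l w"
  unfolding sgnz_def by auto

lemma sgnz_cong_odd: "odd (k - l) \<Longrightarrow> v = w \<Longrightarrow> sgnz k v = - sgnz l w"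
  unfolding sgnz_def by auto

lemma graded_group_zero: "graded_group g \<Longrightarrow> 0 \<in> g q"
  by (simp add: graded_group_def)

lemma graded_group_sgnz: "graded_group g \<Longrightarrow> a \<in> g q \<Longrightarrow> sgnz k a \<in> g q"
  by (simp add: graded_group_def sgnz_def)

lemma graded_group_sum: "graded_group g \<Longrightarrow> (\<And>x. x \<in> S \<Longrightarrow> f x \<in> g q) \<Longrightarrow> sum f S \<in> g q"
  by (induction S rule: infinite_finite_induct) (auto simp: graded_group_def)

lemma homog_list_map_fst_snd:
  "(\<And>g q. (g, q) \<in> set L \<Longrightarrow> g \<in> gA q) \<Longrightarrow> homog_list gA (map fst L) (map snd L)"
  unfolding homog_list_def by (auto simp: nth_mem)

lemma if_zero_sum: "(if b then sum f S else 0) = (\<Sum>x\<in>S. if b then f x else 0)"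
  by simp

section \<open>Paths through a finite set of critical points\<close>

fun path_labels :: "('x \<Rightarrow> 'x \<Rightarrow> 'a) \<Rightarrow> ('x \<Rightarrow> 'x \<Rightarrow> int) \<Rightarrow> 'x \<Rightarrow> 'x list \<Rightarrow> ('a \<times> int) list" where
  "path_labels M dg c [] = []"
| "path_labels M dg c (c' # cs) = (M c c', dg c c') # path_labels M dg c' cs"

fun path_deg :: "('x \<Rightarrow> 'x \<Rightarrow> int) \<Rightarrow> 'x \<Rightarrow> 'x list \<Rightarrow> int" where
  "path_deg dg c [] = 0"
| "path_deg dg c (c' # cs) = dg c c' + path_deg dg c' cs"

text \<open>The Koszul sign exponent collected when the labels of the path are appended one by one
  to a tensor of total degree D, each through an operator of odd degree.\<close>
fun path_sign :: "('x \<Rightarrow> 'x \<Rightarrow> int) \<Rightarrow> int \<Rightarrow> 'x \<Rightarrow> 'x list \<Rightarrow> int" where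
  "path_sign dg D c [] = 0"
| "path_sign dg D c (c' # cs) = D + path_sign dg (D + dg c c') c' cs"

definition paths :: "'x set \<Rightarrow> nat \<Rightarrow> 'x list set" where
  "paths C n = {cs. set cs \<subseteq> C \<and> length cs = n}"

definition paths_upto :: "'x set \<Rightarrow> nat \<Rightarrow> 'x list set" where
  "paths_upto C K = {cs. set cs \<subseteq> C \<and> length cs \<le> K}"

lemma length_path_labels [simp]: "length (path_labels M dg c cs) = length cs"
  by (induction cs arbitrary: c) auto

lemma sum_list_snd_path_labels: "sum_list (map snd (path_labels M dg c cs)) = path_deg dg c cs"
  by (induction cs arbitrary: c) auto

lemma path_labels_append:
  "path_labels M dg c (cs @ ds) = path_labels M dg c cs @ path_labels M dg (last (c # cs)) ds"
  by (induction cs arbitrary: c) auto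

lemma path_deg_append: "path_deg dg c (cs @ ds) = path_deg dg c cs + path_deg dg (last (c # cs)) ds"
  by (induction cs arbitrary: c) (auto simp: algebra_simps)

lemma path_deg_telescope:
  "(\<And>a b. dg a b = ii a - ii b - 1) \<Longrightarrow> path_deg dg c cs = ii c - ii (last (c # cs)) - int (length cs)"
  by (induction cs arbitrary: c) auto

lemma path_sign_shift: "path_sign dg (D + k) c cs = path_sign dg D c cs + k * int (length cs)"
proof (induction cs arbitrary: c D)
  case (Cons a cs)
  have "path_sign dg (D + k + dg c a) a cs = path_sign dg ((D + dg c a) + k) a cs"
    by (simp add: algebra_simps)
  then show ?case using Cons.IH[of "D + dg c a" a] by (simp add: algebra_simps)
qed simp

lemma path_sign_append:
  "path_sign dg D c (cs @ ds) = path_sign dg D c cs + path_sign dg (D + path_deg dg c cs) (last (c # cs)) ds"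
  by (induction cs arbitrary: c D) (auto simp: algebra_simps)

lemma last_Cons_append: "last (c # cs @ ds) = last (last (c # cs) # ds)"
  by (induction cs arbitrary: c) auto

lemma last_Cons_in: "c \<in> C \<Longrightarrow> set cs \<subseteq> C \<Longrightarrow> last (c # cs) \<in> C"
  by (induction cs arbitrary: c) auto

lemma paths_0 [simp]: "paths C 0 = {[]}"
  by (auto simp: paths_def)

lemma paths_Suc: "paths C (Suc n) = (\<lambda>(c, cs). c # cs) ` (C \<times> paths C n)"
  by (auto simp: paths_def image_iff length_Suc_conv)

lemma finite_paths: "finite C \<Longrightarrow> finite (paths C n)"
  by (induction n) (simp_all add: paths_Suc)

lemma sum_paths_Suc:
  assumes "finite C"
  shows "sum f (paths C (Suc n)) = (\<Sum>c\<in>C. \<Sum>cs\<in>paths C n. f (c # cs))"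
proof -
  have "inj_on (\<lambda>(c, cs). c # cs) (C \<times> paths C n)"
    by (auto simp: inj_on_def)
  then have "sum f (paths C (Suc n)) = sum (f \<circ> (\<lambda>(c, cs). c # cs)) (C \<times> paths C n)"
    unfolding paths_Suc by (rule sum.reindex)
  also have "\<dots> = (\<Sum>c\<in>C. \<Sum>cs\<in>paths C n. f (c # cs))"
    by (simp add: sum.cartesian_product comp_def split_def)
  finally show ?thesis .
qed

lemma paths_upto_eq_UN: "paths_upto C K = (\<Union>n\<le>K. paths C n)"
  by (auto simp: paths_upto_def paths_def)

lemma finite_paths_upto: "finite C \<Longrightarrow> finite (paths_upto C K)"
  by (simp add: paths_upto_eq_UN finite_paths)

lemma sum_paths_upto:
  assumes "finite C"
  shows "(\<Sum>n\<le>K. sum f (paths C n)) = sum f (paths_upto C K)"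
  unfolding paths_upto_eq_UN
  by (rule sum.UNION_disjoint[symmetric]) (auto simp: finite_paths[OF assms, unfolded paths_def] paths_def)

lemma path_labels_split_at_vertex: "path_labels M dg c0 (cs @ c2 # ds)
   = path_labels M dg c0 cs @ (M (last (c0 # cs)) c2, dg (last (c0 # cs)) c2) # path_labels M dg c2 ds"
  by (simp add: path_labels_append)

lemma path_labels_split_at_edge: "path_labels M dg c0 (cs @ c1 # c2 # ds)
   = path_labels M dg c0 cs @ (M (last (c0 # cs)) c1, dg (last (c0 # cs)) c1) # (M c1 c2, dg c1 c2)
       # path_labels M dg c2 ds"
  by (simp add: path_labels_append)

lemma path_deg_split_at_vertex:
  "path_deg dg c0 (cs @ c2 # ds) = path_deg dg c0 cs + (dg (last (c0 # cs)) c2 + path_deg dg c2 ds)"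
  by (simp add: path_deg_append)

lemma path_deg_split_at_edge: "path_deg dg c0 (cs @ c1 # c2 # ds)
   = path_deg dg c0 cs + (dg (last (c0 # cs)) c1 + (dg c1 c2 + path_deg dg c2 ds))"
  by (simp add: path_deg_append)

lemma path_sign_split_at_vertex: "path_sign dg D c0 (cs @ c2 # ds)
   = path_sign dg D c0 cs + (D + path_deg dg c0 cs)
     + path_sign dg (D + path_deg dg c0 cs + dg (last (c0 # cs)) c2) c2 ds"
  by (simp add: path_sign_append)

lemma path_sign_split_at_edge: "path_sign dg D c0 (cs @ c1 # c2 # ds)
   = path_sign dg D c0 cs + (D + path_deg dg c0 cs)
     + ((D + path_deg dg c0 cs + dg (last (c0 # cs)) c1)
        + path_sign dg (D + path_deg dg c0 cs + dg (last (c0 # cs)) c1 + dg c1 c2) c2 ds)"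
  by (simp add: path_sign_append)

lemma fsum_eq_sum_atMost: "(\<And>n. K < n \<Longrightarrow> f n = 0) \<Longrightarrow> fsum f = (\<Sum>n\<le>K. f n)"
  unfolding fsum_def by (rule sum.mono_neutral_left) (auto simp: not_le intro: ccontr)

lemma sum_antidiagonals:
  fixes f :: "nat \<Rightarrow> nat \<Rightarrow> 'g::comm_monoid_add"
  assumes "\<And>i j. K < i + j + 1 \<Longrightarrow> f i j = 0"
  shows "(\<Sum>n\<le>K. \<Sum>u\<in>{1..n}. f (u - 1) (n - u)) = (\<Sum>i\<le>K. \<Sum>j\<le>K. f i j)"
proof -
  have "(\<Sum>n\<le>K. \<Sum>u\<in>{1..n}. f (u - 1) (n - u)) = (\<Sum>(n, u)\<in>Sigma {..K} (\<lambda>n. {1..n}). f (u - 1) (n - u))"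
    by (rule sum.Sigma) auto
  also have "\<dots> = (\<Sum>(i, j)\<in>{(i, j). i + j + 1 \<le> K}. f i j)"
    by (rule sum.reindex_bij_witness[where i = "\<lambda>(i, j). (i + j + 1, i + 1)" and j = "\<lambda>(n, u). (u - 1, n - u)"])
      auto
  also have "\<dots> = (\<Sum>(i, j)\<in>{..K} \<times> {..K}. f i j)"
    by (rule sum.mono_neutral_left) (use assms in \<open>force simp: not_le\<close>)+
  also have "\<dots> = (\<Sum>i\<le>K. \<Sum>j\<le>K. f i j)"
    by (rule sum.cartesian_product[symmetric])
  finally show ?thesis .
qed

lemma sum_paths_upto_split:
  assumes fin: "finite C"
    and van: "\<And>cs ds. set cs \<subseteq> C \<Longrightarrow> set ds \<subseteq> C \<Longrightarrow> K < length cs + length ds \<Longrightarrow> f (length cs) (cs @ ds) = 0"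
  shows "(\<Sum>es\<in>paths_upto C K. \<Sum>s\<le>length es. f s es)
       = (\<Sum>cs\<in>paths_upto C K. \<Sum>ds\<in>paths_upto C K. f (length cs) (cs @ ds))"
proof -
  have fP: "finite (paths_upto C K)" by (rule finite_paths_upto[OF fin])
  let ?T = "{(cs, ds). set cs \<subseteq> C \<and> set ds \<subseteq> C \<and> length cs + length ds \<le> K}"
  have "(\<Sum>es\<in>paths_upto C K. \<Sum>s\<le>length es. f s es)
      = (\<Sum>(es, s)\<in>Sigma (paths_upto C K) (\<lambda>es. {..length es}). f s es)"
    by (rule sum.Sigma) (auto simp: fP)
  also have "\<dots> = (\<Sum>(cs, ds)\<in>?T. f (length cs) (cs @ ds))"
    by (rule sum.reindex_bij_witness[where i = "\<lambda>(cs, ds). (cs @ ds, length cs)" and j = "\<lambda>(es, s). (take s es, drop s es)"])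
      (auto simp: paths_upto_def dest: in_set_takeD in_set_dropD)
  also have "\<dots> = (\<Sum>(cs, ds)\<in>paths_upto C K \<times> paths_upto C K. f (length cs) (cs @ ds))"
    by (rule sum.mono_neutral_left) (auto simp: paths_upto_def fP[unfolded paths_upto_def] intro!: van)
  also have "\<dots> = (\<Sum>cs\<in>paths_upto C K. \<Sum>ds\<in>paths_upto C K. f (length cs) (cs @ ds))"
    by (rule sum.cartesian_product[symmetric])
  finally show ?thesis .
qed

lemma sum_paths_upto_split_at_vertex:
  assumes fin: "finite C"
    and van: "\<And>cs c2 ds. set cs \<subseteq> C \<Longrightarrow> c2 \<in> C \<Longrightarrow> set ds \<subseteq> C \<Longrightarrow> K < length cs + length ds + 1 \<Longrightarrow>
      f (length cs) (cs @ c2 # ds) = 0"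
  shows "(\<Sum>es\<in>paths_upto C K. \<Sum>r<length es. f r es)
       = (\<Sum>cs\<in>paths_upto C K. \<Sum>c2\<in>C. \<Sum>ds\<in>paths_upto C K. f (length cs) (cs @ c2 # ds))"
proof -
  have fP: "finite (paths_upto C K)" by (rule finite_paths_upto[OF fin])
  let ?T = "{(cs, c2, ds). set cs \<subseteq> C \<and> c2 \<in> C \<and> set ds \<subseteq> C \<and> length cs + length ds + 1 \<le> K}"
  have "(\<Sum>es\<in>paths_upto C K. \<Sum>r<length es. f r es)
      = (\<Sum>(es, r)\<in>Sigma (paths_upto C K) (\<lambda>es. {..<length es}). f r es)"
    by (rule sum.Sigma) (auto simp: fP)
  also have "\<dots> = (\<Sum>(cs, c2, ds)\<in>?T. f (length cs) (cs @ c2 # ds))"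
  proof (rule sum.reindex_bij_witness[where i = "\<lambda>(cs, c2, ds). (cs @ c2 # ds, length cs)"
        and j = "\<lambda>(es, r). (take r es, es ! r, drop (Suc r) es)"])
    fix a assume "a \<in> Sigma (paths_upto C K) (\<lambda>es. {..<length es})"
    then obtain es r where a: "a = (es, r)" "set es \<subseteq> C" "length es \<le> K" "r < length es"
      by (auto simp: paths_upto_def)
    then show "(case (case a of (es, r) \<Rightarrow> (take r es, es ! r, drop (Suc r) es)) of
        (cs, c2, ds) \<Rightarrow> (cs @ c2 # ds, length cs)) = a"
      by (simp add: id_take_nth_drop[symmetric])
    show "(case a of (es, r) \<Rightarrow> (take r es, es ! r, drop (Suc r) es)) \<in> ?T"
      using a by (auto dest: in_set_takeD in_set_dropD simp: nth_mem subset_iff)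
    show "(case (case a of (es, r) \<Rightarrow> (take r es, es ! r, drop (Suc r) es)) of
        (cs, c2, ds) \<Rightarrow> f (length cs) (cs @ c2 # ds)) = (case a of (es, r) \<Rightarrow> f r es)"
      using a by (simp add: id_take_nth_drop[symmetric])
  qed (auto simp: paths_upto_def nth_append)
  also have "\<dots> = (\<Sum>(cs, c2, ds)\<in>paths_upto C K \<times> C \<times> paths_upto C K. f (length cs) (cs @ c2 # ds))"
    by (rule sum.mono_neutral_left) (auto simp: paths_upto_def fP[unfolded paths_upto_def] fin intro!: van)
  also have "\<dots> = (\<Sum>cs\<in>paths_upto C K. \<Sum>c2\<in>C. \<Sum>ds\<in>paths_upto C K. f (length cs) (cs @ c2 # ds))"
    by (simp add: sum.cartesian_product split_def)
  finally show ?thesis .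
qed

lemma sum_paths_upto_split_at_edge:
  assumes fin: "finite C"
    and van: "\<And>cs c1 c2 ds. set cs \<subseteq> C \<Longrightarrow> c1 \<in> C \<Longrightarrow> c2 \<in> C \<Longrightarrow> set ds \<subseteq> C \<Longrightarrow>
      K < length cs + length ds + 2 \<Longrightarrow> f (length cs) (cs @ c1 # c2 # ds) = 0"
  shows "(\<Sum>es\<in>paths_upto C K. \<Sum>r<length es - 1. f r es)
       = (\<Sum>cs\<in>paths_upto C K. \<Sum>c1\<in>C. \<Sum>c2\<in>C. \<Sum>ds\<in>paths_upto C K. f (length cs) (cs @ c1 # c2 # ds))"
proof -
  have fP: "finite (paths_upto C K)" by (rule finite_paths_upto[OF fin])
  let ?T = "{(cs, c1, c2, ds). set cs \<subseteq> C \<and> c1 \<in> C \<and> c2 \<in> C \<and> set ds \<subseteq> C \<and> length cs + length ds + 2 \<le> K}"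
  have "(\<Sum>es\<in>paths_upto C K. \<Sum>r<length es - 1. f r es)
      = (\<Sum>(es, r)\<in>Sigma (paths_upto C K) (\<lambda>es. {..<length es - 1}). f r es)"
    by (rule sum.Sigma) (auto simp: fP)
  also have "\<dots> = (\<Sum>(cs, c1, c2, ds)\<in>?T. f (length cs) (cs @ c1 # c2 # ds))"
  proof (rule sum.reindex_bij_witness[where i = "\<lambda>(cs, c1, c2, ds). (cs @ c1 # c2 # ds, length cs)"
        and j = "\<lambda>(es, r). (take r es, es ! r, es ! Suc r, drop (Suc (Suc r)) es)"])
    fix a assume "a \<in> Sigma (paths_upto C K) (\<lambda>es. {..<length es - 1})"
    then obtain es r where a: "a = (es, r)" "set es \<subseteq> C" "length es \<le> K" "Suc r < length es"
      by (auto simp: paths_upto_def)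
    have e: "take r es @ es ! r # es ! Suc r # drop (Suc (Suc r)) es = es"
      using a(4) by (metis Cons_nth_drop_Suc Suc_lessD append_take_drop_id)
    show "(case (case a of (es, r) \<Rightarrow> (take r es, es ! r, es ! Suc r, drop (Suc (Suc r)) es)) of
        (cs, c1, c2, ds) \<Rightarrow> (cs @ c1 # c2 # ds, length cs)) = a"
      using a e by simp
    show "(case a of (es, r) \<Rightarrow> (take r es, es ! r, es ! Suc r, drop (Suc (Suc r)) es)) \<in> ?T"
      using a by (auto dest: in_set_takeD in_set_dropD simp: nth_mem subset_iff)
    show "(case (case a of (es, r) \<Rightarrow> (take r es, es ! r, es ! Suc r, drop (Suc (Suc r)) es)) of
        (cs, c1, c2, ds) \<Rightarrow> f (length cs) (cs @ c1 # c2 # ds)) = (case a of (es, r) \<Rightarrow> f r es)"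
      using a e by simp
  qed (auto simp: paths_upto_def nth_append)
  also have "\<dots> = (\<Sum>(cs, c1, c2, ds)\<in>paths_upto C K \<times> C \<times> C \<times> paths_upto C K. f (length cs) (cs @ c1 # c2 # ds))"
    by (rule sum.mono_neutral_left) (auto simp: paths_upto_def fP[unfolded paths_upto_def] fin intro!: van)
  also have "\<dots> = (\<Sum>cs\<in>paths_upto C K. \<Sum>c1\<in>C. \<Sum>c2\<in>C. \<Sum>ds\<in>paths_upto C K. f (length cs) (cs @ c1 # c2 # ds))"
    by (simp add: sum.cartesian_product split_def)
  finally show ?thesis .
qed

text \<open>Formal sums of tensors are handled dually: a functional on pure tensors is extended
  linearly, and the operator c-tilde is transposed to the operator ctilde_adj on functionals,
  whose flag records the parity of the degree of c (all the Koszul sign depends on).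
  Iterates of c-tilde then become iterates of ctilde_adj, which are explicit sums over paths.\<close>

definition tensor_eval :: "('t \<Rightarrow> 'f::ab_group_add) \<Rightarrow> (bool \<times> 't) list \<Rightarrow> 'f" where
  "tensor_eval \<Phi> ws = sum_list (map (\<lambda>(s, t). if s then \<Phi> t else - \<Phi> t) ws)"

definition ctilde_adj :: "('x \<Rightarrow> 'y \<Rightarrow> 'a) \<Rightarrow> ('x \<Rightarrow> 'y \<Rightarrow> int) \<Rightarrow> bool \<Rightarrow> 'y set \<Rightarrow>
    (('f \<times> int) \<times> ('a \<times> int) list \<times> 'y \<Rightarrow> 'g::ab_group_add) \<Rightarrow>
    ('f \<times> int) \<times> ('a \<times> int) list \<times> 'x \<Rightarrow> 'g" where
  "ctilde_adj c dg odd_deg D \<Phi> t = (case t of (ap, gs, x) \<Rightarrow>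
     \<Sum>y\<in>D. sgnz (if odd_deg then snd ap + sum_list (map snd gs) else 0) (\<Phi> (ap, gs @ [(c x y, dg x y)], y)))"

definition nu_at :: "(nat \<Rightarrow> 'f::ab_group_add \<Rightarrow> 'a list \<Rightarrow> 'f) \<Rightarrow> 'y \<Rightarrow> ('f \<times> int) \<times> ('a \<times> int) list \<times> 'y \<Rightarrow> 'f" where
  "nu_at nu y t = (case t of (ap, gs, z) \<Rightarrow> if z = y then nu (Suc (length gs)) (fst ap) (map fst gs) else 0)"

lemma tensor_eval_Nil [simp]: "tensor_eval \<Phi> [] = 0"
  by (simp add: tensor_eval_def)

lemma tensor_eval_append: "tensor_eval \<Phi> (xs @ ys) = tensor_eval \<Phi> xs + tensor_eval \<Phi> ys"
  by (simp add: tensor_eval_def)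

lemma tensor_eval_gen: "tensor_eval \<Phi> (gen a p x) = \<Phi> ((a, p), [], x)"
  by (simp add: gen_def tensor_eval_def)

lemma nu_eval_eq_tensor_eval: "nu_eval nu ws y = tensor_eval (nu_at nu y) ws"
  unfolding nu_eval_def tensor_eval_def
  by (intro arg_cong[where f = sum_list] map_cong) (auto simp: nu_at_def)

lemma ctilde_adj_simp: "ctilde_adj c dg odd_deg D \<Phi> (ap, gs, x) =
   (\<Sum>y\<in>D. sgnz (if odd_deg then snd ap + sum_list (map snd gs) else 0) (\<Phi> (ap, gs @ [(c x y, dg x y)], y)))"
  by (simp add: ctilde_adj_def)

lemma nu_at_simp: "nu_at nu y (ap, gs, z) = (if z = y then nu (Suc (length gs)) (fst ap) (map fst gs) else 0)"
  by (simp add: nu_at_def)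

lemma tensor_eval_ctilde:
  assumes "finite D"
  shows "tensor_eval \<Phi> (ctilde e ic jd D c ws)
       = tensor_eval (ctilde_adj c (\<lambda>x y. int (ic x) - int (jd y) + e) (odd e) D \<Phi>) ws"
proof (induction ws)
  case (Cons w ws)
  obtain s ap gs x where w: "w = (s, ap, gs, x)" by (cases w) auto
  let ?De = "snd ap + sum_list (map snd gs)"
  let ?F = "\<lambda>y. \<Phi> (ap, gs @ [(c x y, int (ic x) - int (jd y) + e)], y)"
  let ?S = "ctilde_adj c (\<lambda>x y. int (ic x) - int (jd y) + e) (odd e) D \<Phi> (ap, gs, x)"
  have "(if s = even (e * ?De) then ?F y else - ?F y)
      = (if s then sgnz (if odd e then ?De else 0) (?F y) else - sgnz (if odd e then ?De else 0) (?F y))" for y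
    by (cases s; cases "even e") (simp_all add: sgnz_def)
  then have "tensor_eval \<Phi> (map (\<lambda>y. (s = even (e * ?De), ap, gs @ [(c x y, int (ic x) - int (jd y) + e)], y))
        (sorted_list_of_set D)) = (if s then ?S else - ?S)"
    using assms by (simp add: tensor_eval_def comp_def sum_list_distinct_conv_sum_set ctilde_adj_simp sum_negf)
  then show ?case
    using Cons.IH by (simp add: ctilde_def w tensor_eval_append) (simp add: tensor_eval_def)
qed (simp add: ctilde_def)

lemma tensor_eval_funpow:
  fixes T :: "(bool \<times> 't) list \<Rightarrow> (bool \<times> 't) list" and S :: "('t \<Rightarrow> 'f::ab_group_add) \<Rightarrow> 't \<Rightarrow> 'f"
  assumes "\<And>\<Phi> ws. tensor_eval \<Phi> (T ws) = tensor_eval (S \<Phi>) ws"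
  shows "tensor_eval \<Phi> ((T ^^ n) ws) = tensor_eval ((S ^^ n) \<Phi>) ws"
proof (induction n arbitrary: \<Phi>)
  case (Suc n)
  have "tensor_eval \<Phi> ((T ^^ Suc n) ws) = tensor_eval (S \<Phi>) ((T ^^ n) ws)"
    by (simp add: assms)
  also have "\<dots> = tensor_eval ((S ^^ Suc n) \<Phi>) ws"
    by (simp only: Suc.IH funpow_Suc_right comp_def)
  finally show ?case .
qed simp

lemma ctilde_adj_pow_eq_sum_paths:
  assumes "finite C"
  shows "(ctilde_adj M dg True C ^^ n) \<Phi> (ap, gs, c) =
    (\<Sum>cs\<in>paths C n. sgnz (path_sign dg (snd ap + sum_list (map snd gs)) c cs)
        (\<Phi> (ap, gs @ path_labels M dg c cs, last (c # cs))))"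
proof (induction n arbitrary: gs c)
  case (Suc n)
  let ?D = "snd ap + sum_list (map snd gs)"
  have "(ctilde_adj M dg True C ^^ Suc n) \<Phi> (ap, gs, c)
      = (\<Sum>c'\<in>C. sgnz ?D ((ctilde_adj M dg True C ^^ n) \<Phi> (ap, gs @ [(M c c', dg c c')], c')))"
    by (simp add: ctilde_adj_simp)
  also have "\<dots> = (\<Sum>c'\<in>C. \<Sum>cs\<in>paths C n.
      sgnz (path_sign dg ?D c (c' # cs)) (\<Phi> (ap, gs @ path_labels M dg c (c' # cs), last (c # c' # cs))))"
    by (simp add: Suc.IH sgnz_sum sgnz_sgnz algebra_simps)
  also have "\<dots> = (\<Sum>cs\<in>paths C (Suc n).
      sgnz (path_sign dg ?D c cs) (\<Phi> (ap, gs @ path_labels M dg c cs, last (c # cs))))"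
    by (simp add: sum_paths_Suc[OF assms])
  finally show ?case .
qed simp

lemma ctilde_adj_add:
  "ctilde_adj c dg od D (\<lambda>t. \<Phi> t + \<Psi> t) t0 = ctilde_adj c dg od D \<Phi> t0 + ctilde_adj c dg od D \<Psi> t0"
  by (cases t0) (simp add: ctilde_adj_simp sgnz_add sum.distrib)

lemma ctilde_adj_diff:
  "ctilde_adj c dg od D (\<lambda>t. \<Phi> t - \<Psi> t) t0 = ctilde_adj c dg od D \<Phi> t0 - ctilde_adj c dg od D \<Psi> t0"
  by (cases t0) (simp add: ctilde_adj_simp sgnz_diff sum_subtractf)

lemma ctilde_adj_zero: "ctilde_adj c dg od D (\<lambda>t. 0) = (\<lambda>t. 0)"
  by (auto simp: ctilde_adj_def)

lemma ctilde_adj_sum: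
  "ctilde_adj c dg od D (\<lambda>t. \<Sum>i\<in>I. \<Phi> i t) t0 = (\<Sum>i\<in>I. ctilde_adj c dg od D (\<Phi> i) t0)"
  by (cases t0) (simp add: ctilde_adj_simp sgnz_sum sum.swap[of _ D])

lemma ctilde_adj_pow_diff:
  fixes c :: "'x \<Rightarrow> 'x \<Rightarrow> 'a::ab_group_add"
  shows "(ctilde_adj c dg od D ^^ n) (\<lambda>t. \<Phi> t - \<Psi> t)
     = (\<lambda>t. (ctilde_adj c dg od D ^^ n) \<Phi> t - (ctilde_adj c dg od D ^^ n) \<Psi> t)"
  by (induction n) (simp_all add: ctilde_adj_diff)

lemma ctilde_adj_pow_zero:
  fixes c :: "'x \<Rightarrow> 'x \<Rightarrow> 'a::ab_group_add"
  shows "(ctilde_adj c dg od D ^^ n) (\<lambda>t. 0) = (\<lambda>t. 0)"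
  by (induction n) (simp_all add: ctilde_adj_zero)

lemma ctilde_adj_cong:
  "(\<And>ap gs z. z \<in> D \<Longrightarrow> \<Phi> (ap, gs, z) = \<Psi> (ap, gs, z)) \<Longrightarrow> ctilde_adj c dg od D \<Phi> = ctilde_adj c dg od D \<Psi>"
  by (rule ext) (auto simp: ctilde_adj_def split: prod.splits intro!: sum.cong)

lemma ctilde_adj_pow_cong:
  assumes eq: "\<And>ap gs z. z \<in> D \<Longrightarrow> \<Phi> (ap, gs, z) = \<Psi> (ap, gs, z)" and z: "z \<in> D"
  shows "(ctilde_adj c dg od D ^^ n) \<Phi> (ap, gs, z) = (ctilde_adj c dg od D ^^ n) \<Psi> (ap, gs, z)"
proof (cases n)
  case (Suc k)
  have "ctilde_adj c dg od D \<Phi> = ctilde_adj c dg od D \<Psi>" by (intro ctilde_adj_cong eq)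
  then show ?thesis unfolding Suc funpow_Suc_right comp_def by simp
qed (simp add: eq z)

definition slot_additive :: "(('f \<times> int) \<times> ('a::ab_group_add \<times> int) list \<times> 'z \<Rightarrow> 'g::ab_group_add) \<Rightarrow> bool" where
  "slot_additive \<Phi> \<longleftrightarrow> (\<forall>ap gs z i u v. i < length gs \<longrightarrow>
     \<Phi> (ap, gs[i := (u + v, snd (gs ! i))], z)
       = \<Phi> (ap, gs[i := (u, snd (gs ! i))], z) + \<Phi> (ap, gs[i := (v, snd (gs ! i))], z))"

lemma slot_additive_zero_at:
  assumes g: "slot_additive \<Phi>" and i: "i < length gs" and z: "fst (gs ! i) = 0"
  shows "\<Phi> (ap, gs, w) = 0"
proof -
  have e: "gs[i := (0, snd (gs ! i))] = gs" using z by (metis i list_update_id prod.collapse)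
  have "\<Phi> (ap, gs[i := (0 + 0, snd (gs ! i))], w)
      = \<Phi> (ap, gs[i := (0, snd (gs ! i))], w) + \<Phi> (ap, gs[i := (0, snd (gs ! i))], w)"
    using g i unfolding slot_additive_def by blast
  then show ?thesis using e by simp
qed

lemma slot_additive_zero_last: "slot_additive \<Phi> \<Longrightarrow> \<Phi> (ap, xs @ [(0, q)], w) = 0"
  by (rule slot_additive_zero_at[of _ "length xs"]) auto

lemma slot_additive_diff_last:
  assumes g: "slot_additive \<Phi>"
  shows "\<Phi> (ap, xs @ [(u - v, q)], w) = \<Phi> (ap, xs @ [(u, q)], w) - \<Phi> (ap, xs @ [(v, q)], w)"
proof -
  let ?gs = "xs @ [(0, q)]"
  have "\<Phi> (ap, ?gs[length xs := ((u - v) + v, snd (?gs ! length xs))], w)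
      = \<Phi> (ap, ?gs[length xs := (u - v, snd (?gs ! length xs))], w)
        + \<Phi> (ap, ?gs[length xs := (v, snd (?gs ! length xs))], w)"
    using g unfolding slot_additive_def by (metis length_append_singleton lessI)
  then show ?thesis by (simp add: algebra_simps)
qed

lemma slot_additive_ctilde_adj:
  fixes \<Phi> :: "('f \<times> int) \<times> ('a::ab_group_add \<times> int) list \<times> 'y \<Rightarrow> 'g::ab_group_add"
    and c :: "'x \<Rightarrow> 'y \<Rightarrow> 'a"
  assumes g: "slot_additive \<Phi>"
  shows "slot_additive (ctilde_adj c dg od D \<Phi>)"
  unfolding slot_additive_def
proof (intro allI impI)
  fix ap :: "'f \<times> int" and gs :: "('a \<times> int) list" and x :: 'x and i :: nat and u v :: 'a
  assume i: "i < length gs"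
  have upd: "gs[i := w] @ [l] = (gs @ [l])[i := w]" for w l using i by (simp add: list_update_append)
  have snd_upd: "map snd (gs[i := (w, snd (gs ! i))]) = map snd gs" for w
    using i by (simp add: map_update) (metis list_update_id nth_map)
  have "\<Phi> (ap, (gs @ [l])[i := (u + v, snd ((gs @ [l]) ! i))], y)
      = \<Phi> (ap, (gs @ [l])[i := (u, snd ((gs @ [l]) ! i))], y) + \<Phi> (ap, (gs @ [l])[i := (v, snd ((gs @ [l]) ! i))], y)"
    for l y using g i unfolding slot_additive_def by (metis length_append_singleton less_SucI)
  then show "ctilde_adj c dg od D \<Phi> (ap, gs[i := (u + v, snd (gs ! i))], x)
      = ctilde_adj c dg od D \<Phi> (ap, gs[i := (u, snd (gs ! i))], x) + ctilde_adj c dg od D \<Phi> (ap, gs[i := (v, snd (gs ! i))], x)"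
    unfolding ctilde_adj_simp snd_upd upd using i by (simp add: nth_append sum.distrib[symmetric] sgnz_add)
qed

lemma slot_additive_ctilde_adj_pow:
  fixes c :: "'x \<Rightarrow> 'x \<Rightarrow> 'a::ab_group_add"
  shows "slot_additive \<Phi> \<Longrightarrow> slot_additive ((ctilde_adj c dg od D ^^ n) \<Phi>)"
  by (induction n) (auto intro: slot_additive_ctilde_adj)

definition vanishes_below :: "(int \<Rightarrow> 'a set) \<Rightarrow> 'z set \<Rightarrow> ('z \<Rightarrow> int) \<Rightarrow>
    (('f \<times> int) \<times> ('a \<times> int) list \<times> 'z \<Rightarrow> 'g::zero) \<Rightarrow> bool" where
  "vanishes_below gA D B \<Phi> \<longleftrightarrow> (\<forall>ap gs z. z \<in> D \<longrightarrow> (\<forall>g q. (g, q) \<in> set gs \<longrightarrow> g \<in> gA q) \<longrightarrow>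
      sum_list (map snd gs) + B z < 0 \<longrightarrow> \<Phi> (ap, gs, z) = 0)"

lemma vanishes_below_ctilde_adj:
  assumes cdeg: "\<And>x y. x \<in> Dx \<Longrightarrow> y \<in> Dy \<Longrightarrow> c x y \<in> gA (dg x y)"
    and v: "vanishes_below gA Dy B \<Phi>"
    and le: "\<And>x y. x \<in> Dx \<Longrightarrow> y \<in> Dy \<Longrightarrow> dg x y + B y \<le> B' x"
  shows "vanishes_below gA Dx B' (ctilde_adj c dg od Dy (\<Phi> :: _ \<Rightarrow> 'g::ab_group_add))"
  unfolding vanishes_below_def
proof (intro allI impI)
  fix ap gs x
  assume x: "x \<in> Dx" and hom: "\<forall>g q. (g, q) \<in> set gs \<longrightarrow> g \<in> gA q"
    and neg: "sum_list (map snd gs) + B' x < 0"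
  have "\<Phi> (ap, gs @ [(c x y, dg x y)], y) = 0" if y: "y \<in> Dy" for y
  proof -
    have "sum_list (map snd (gs @ [(c x y, dg x y)])) + B y < 0" using neg le[OF x y] by simp
    moreover have "\<forall>g q. (g, q) \<in> set (gs @ [(c x y, dg x y)]) \<longrightarrow> g \<in> gA q"
      using hom cdeg[OF x y] by auto
    ultimately show ?thesis using v y unfolding vanishes_below_def by blast
  qed
  then show "ctilde_adj c dg od Dy \<Phi> (ap, gs, x) = 0" by (simp add: ctilde_adj_simp)
qed

lemma vanishes_below_ctilde_adj_pow:
  assumes cdeg: "\<And>x y. x \<in> D \<Longrightarrow> y \<in> D \<Longrightarrow> c x y \<in> gA (ii x - ii y - 1)"
    and v: "vanishes_below gA D (\<lambda>z. ii z + \<beta>) \<Phi>"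
  shows "vanishes_below gA D (\<lambda>z. ii z + \<beta> - int k)
     ((ctilde_adj c (\<lambda>x y. ii x - ii y - 1) od D ^^ k) (\<Phi> :: _ \<Rightarrow> 'g::ab_group_add))"
proof (induction k)
  case (Suc k)
  show ?case unfolding funpow.simps comp_def
    by (rule vanishes_below_ctilde_adj[OF cdeg Suc]) simp_all
qed (use v in simp)

lemma vanishes_below_empty:
  "vanishes_below gA D B \<Phi> \<Longrightarrow> z \<in> D \<Longrightarrow> B z < 0 \<Longrightarrow> \<Phi> (ap, [], z) = 0"
  unfolding vanishes_below_def by (cases ap) auto

locale connective_ainf_module =
  fixes gA :: "int \<Rightarrow> 'a::ab_group_add set" and dA :: "'a \<Rightarrow> 'a" and mul :: "'a \<Rightarrow> 'a \<Rightarrow> 'a"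
    and gF :: "int \<Rightarrow> 'f::ab_group_add set" and nu :: "nat \<Rightarrow> 'f \<Rightarrow> 'a list \<Rightarrow> 'f"
  assumes alg: "ainf_alg gA dA mul"
    and nonneg: "\<And>q. q < 0 \<Longrightarrow> gA q = {0}"
    and module: "ainf_module gA dA mul gF nu"
begin

lemma gA_zero: "0 \<in> gA q"
  using alg by (simp add: ainf_alg_def graded_group_zero)

lemma graded_gF: "graded_group gF"
  using module by (simp add: ainf_module_def)

lemma dA_add: "dA (x + y) = dA x + dA y"
  using alg by (simp add: ainf_alg_def)

lemma dA_zero: "dA 0 = 0"
  using dA_add[of 0 0] by simp

lemma dA_deg: "x \<in> gA q \<Longrightarrow> dA x \<in> gA (q - 1)"
  using alg by (simp add: ainf_alg_def)

lemma mul_deg: "x \<in> gA q \<Longrightarrow> y \<in> gA q' \<Longrightarrow> mul x y \<in> gA (q + q')"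
  using alg by (simp add: ainf_alg_def)

lemma mul_add_left: "mul (x + y) z = mul x z + mul y z"
  using alg by (simp add: ainf_alg_def)

lemma mul_add_right: "mul x (y + z) = mul x y + mul x z"
  using alg by (simp add: ainf_alg_def)

lemma mul_zero_left: "mul 0 z = 0"
  using mul_add_left[of 0 0 z] by simp

lemma mul_zero_right: "mul z 0 = 0"
  using mul_add_right[of z 0 0] by simp

lemma nu_add: "nu n (x + y) gs = nu n x gs + nu n y gs"
  using module by (simp add: ainf_module_def)

lemma nu_zero: "nu n 0 gs = 0"
  using nu_add[of n 0 0 gs] by simp

lemma nu_sgnz: "nu n (sgnz k x) gs = sgnz k (nu n x gs)"
proof -
  have "- nu n x gs = nu n (- x) gs"
    using nu_add[of n x "- x" gs] by (simp add: nu_zero neg_eq_iff_add_eq_0)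
  then show ?thesis by (simp add: sgnz_def)
qed

lemma nu_if_zero: "nu n (if b then x else 0) gs = (if b then nu n x gs else 0)"
  by (simp add: nu_zero)

lemma nu_sum: "nu n (sum f S) gs = (\<Sum>x\<in>S. nu n (f x) gs)"
  by (induction S rule: infinite_finite_induct) (auto simp: nu_zero nu_add)

lemma nu_slot_add: "nu n x (xs @ (u + v) # ys) = nu n x (xs @ u # ys) + nu n x (xs @ v # ys)"
proof -
  have "length xs < length (xs @ 0 # ys)" by simp
  then have "nu n x ((xs @ 0 # ys)[length xs := u + v])
      = nu n x ((xs @ 0 # ys)[length xs := u]) + nu n x ((xs @ 0 # ys)[length xs := v])"
    using module unfolding ainf_module_def by blast
  then show ?thesis by simp
qed

lemma nu_slot_zero: "nu n x (xs @ 0 # ys) = 0"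
  using nu_slot_add[of n x xs 0 0 ys] by simp

lemma nu_slot_sgnz: "nu n x (xs @ sgnz k u # ys) = sgnz k (nu n x (xs @ u # ys))"
proof -
  have "- nu n x (xs @ u # ys) = nu n x (xs @ - u # ys)"
    using nu_slot_add[of n x xs u "- u" ys] by (simp add: nu_slot_zero neg_eq_iff_add_eq_0)
  then show ?thesis by (simp add: sgnz_def)
qed

lemma nu_slot_sum: "nu n x (xs @ sum f S # ys) = (\<Sum>s\<in>S. nu n x (xs @ f s # ys))"
  by (induction S rule: infinite_finite_induct) (auto simp: nu_slot_zero nu_slot_add)

lemma nu_eq_0_if_deg_neg:
  assumes hom: "\<And>g q. (g, q) \<in> set L \<Longrightarrow> g \<in> gA q" and neg: "sum_list (map snd L) < 0"
  shows "nu n x (map fst L) = 0"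
proof -
  have "\<exists>q\<in>set (map snd L). q < 0"
  proof (rule ccontr)
    assume "\<not> ?thesis"
    then have "0 \<le> sum_list (map snd L)" by (intro sum_list_nonneg) (auto simp: not_less)
    with neg show False by simp
  qed
  then obtain i where i: "i < length L" "snd (L ! i) < 0"
    by (auto simp: in_set_conv_nth)
  then have "fst (L ! i) \<in> gA (snd (L ! i))"
    using hom[of "fst (L ! i)" "snd (L ! i)"] by (simp add: nth_mem)
  then have "map fst L ! i = 0" using nonneg[OF i(2)] i(1) by simp
  then show ?thesis
    using id_take_nth_drop[of i "map fst L"] i(1) nu_slot_zero by (metis length_map)
qed

lemma nu_deg_homog:
  "n \<ge> 1 \<Longrightarrow> x \<in> gF p \<Longrightarrow> homog_list gA gs qs \<Longrightarrow> length gs = n - 1 \<Longrightarrow>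
    nu n x gs \<in> gF (p + sum_list qs + int n - 2)"
  using module unfolding ainf_module_def by blast

lemma nu_deg:
  assumes "x \<in> gF p" and "\<And>g q. (g, q) \<in> set L \<Longrightarrow> g \<in> gA q"
  shows "nu (Suc (length L)) x (map fst L) \<in> gF (p + sum_list (map snd L) + int (Suc (length L)) - 2)"
proof (rule nu_deg_homog[OF _ assms(1)])
  show "homog_list gA (map fst L) (map snd L)"
    unfolding homog_list_def using assms(2) by (auto simp: nth_mem)
qed simp_all

lemma slot_additive_nu_at: "slot_additive (nu_at nu y)"
  unfolding slot_additive_def nu_at_def
proof (intro allI impI)
  fix ap :: "'f \<times> int" and gs :: "('a \<times> int) list" and z and i :: nat and u v :: 'a
  assume i: "i < length gs"
  have m: "map fst (gs[i := (w, snd (gs ! i))]) = (map fst gs)[i := w]" for w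
    by (simp add: map_update)
  have "nu (Suc (length gs)) (fst ap) ((map fst gs)[i := u + v])
      = nu (Suc (length gs)) (fst ap) ((map fst gs)[i := u]) + nu (Suc (length gs)) (fst ap) ((map fst gs)[i := v])"
    using module i unfolding ainf_module_def by simp
  then show "(case (ap, gs[i := (u + v, snd (gs ! i))], z) of
        (ap, gs, z) \<Rightarrow> if z = y then nu (Suc (length gs)) (fst ap) (map fst gs) else 0)
      = (case (ap, gs[i := (u, snd (gs ! i))], z) of
        (ap, gs, z) \<Rightarrow> if z = y then nu (Suc (length gs)) (fst ap) (map fst gs) else 0)
      + (case (ap, gs[i := (v, snd (gs ! i))], z) of
        (ap, gs, z) \<Rightarrow> if z = y then nu (Suc (length gs)) (fst ap) (map fst gs) else 0)"
    by (simp add: m)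
qed

lemma vanishes_below_nu_at: "(\<And>z. z \<in> D \<Longrightarrow> 0 \<le> B z) \<Longrightarrow> vanishes_below gA D B (nu_at nu y)"
  unfolding vanishes_below_def nu_at_def
proof (intro allI impI)
  fix ap gs z
  assume "\<And>z. z \<in> D \<Longrightarrow> 0 \<le> B z" "z \<in> D" "\<forall>g q. (g, q) \<in> set gs \<longrightarrow> g \<in> gA q"
    "sum_list (map snd gs) + B z < 0"
  then have "nu (Suc (length gs)) (fst ap) (map fst gs) = 0"
    by (intro nu_eq_0_if_deg_neg) force+
  then show "(case (ap, gs, z) of (ap, gs, z) \<Rightarrow> if z = y then nu (Suc (length gs)) (fst ap) (map fst gs) else 0) = 0"
    by simp
qed

definition nu_nu_terms :: "'f \<Rightarrow> 'a list \<Rightarrow> 'f" where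
  "nu_nu_terms x gs = (\<Sum>s\<le>length gs. sgnz (int (s + 1) * int (length gs - s))
     (nu (length gs - s + 1) (nu (s + 1) x (take s gs)) (drop s gs)))"

definition nu_dA_terms :: "int \<Rightarrow> 'f \<Rightarrow> 'a list \<Rightarrow> int list \<Rightarrow> 'f" where
  "nu_dA_terms p x gs qs = (\<Sum>r<length gs. sgnz (int (length gs) + p + sum_list (take r qs))
     (nu (length gs + 1) x (take r gs @ dA (gs ! r) # drop (Suc r) gs)))"

definition nu_mul_terms :: "'f \<Rightarrow> 'a list \<Rightarrow> 'f" where
  "nu_mul_terms x gs = (\<Sum>r<length gs - 1. sgnz (int r + 1)
     (nu (length gs) x (take r gs @ mul (gs ! r) (gs ! Suc r) # drop (Suc (Suc r)) gs)))"

definition mu_insert_term :: "int \<Rightarrow> 'f \<Rightarrow> 'a list \<Rightarrow> int list \<Rightarrow> nat \<Rightarrow> nat \<Rightarrow> 'f" where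
  "mu_insert_term p x gs qs r s =
     sgnz (int r + int s * int (length gs + 1 - r - s) + (int s - 2) * (p + sum_list (take (r - 1) qs)))
       (nu (r + (length gs + 1 - r - s) + 1) x
          (take (r - 1) gs @ [mu dA mul s (take s (drop (r - 1) gs))] @ drop (r - 1 + s) gs))"

lemma module_relation:
  assumes "x \<in> gF p" and "homog_list gA gs qs"
  shows "(\<Sum>s\<in>{1..length gs + 1}. sgnz (int s * int (length gs + 1 - s))
            (nu (length gs + 1 - s + 1) (nu s x (take (s - 1) gs)) (drop (s - 1) gs)))
       + (\<Sum>r\<in>{1..length gs + 1}. \<Sum>s\<in>{1..length gs + 1 - r}. mu_insert_term p x gs qs r s) = 0"
proof -
  have "length gs + 1 \<ge> 1" and "length gs = length gs + 1 - 1" by simp_all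
  with module assms show ?thesis unfolding ainf_module_def mu_insert_term_def by blast
qed

lemma sum_nu_nu_eq_nu_nu_terms:
  "(\<Sum>s\<in>{1..length gs + 1}. sgnz (int s * int (length gs + 1 - s))
       (nu (length gs + 1 - s + 1) (nu s x (take (s - 1) gs)) (drop (s - 1) gs)))
   = nu_nu_terms x gs" (is "(\<Sum>s\<in>_. ?F s) = _")
proof -
  have "(\<Sum>s\<in>{1..length gs + 1}. ?F s) = (\<Sum>s\<in>{0..length gs}. ?F (Suc s))"
    using sum.shift_bounds_cl_Suc_ivl[of ?F 0 "length gs"] by simp
  also have "\<dots> = nu_nu_terms x gs"
    unfolding nu_nu_terms_def atLeast0AtMost by (rule sum.cong) (auto simp: algebra_simps)
  finally show ?thesis .
qed

lemma mu_insert_term_1: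
  assumes "r < length gs"
  shows "mu_insert_term p x gs qs (Suc r) 1 = sgnz (int (length gs) + p + sum_list (take r qs))
     (nu (length gs + 1) x (take r gs @ dA (gs ! r) # drop (Suc r) gs))"
  unfolding mu_insert_term_def
proof (rule sgnz_cong_even)
  have "mu dA mul 1 (take 1 (drop r gs)) = dA (gs ! r)"
    using assms by (simp add: mu_def)
  moreover have i: "Suc r + (length gs + 1 - Suc r - 1) + 1 = length gs + 1" using assms by simp
  ultimately show "nu (Suc r + (length gs + 1 - Suc r - 1) + 1) x
      (take (Suc r - 1) gs @ [mu dA mul 1 (take 1 (drop (Suc r - 1) gs))] @ drop (Suc r - 1 + 1) gs)
    = nu (length gs + 1) x (take r gs @ dA (gs ! r) # drop (Suc r) gs)"
    by (simp only: i) simp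
qed (use assms in \<open>simp add: of_nat_diff algebra_simps\<close>)

lemma mu_insert_term_2:
  assumes "Suc r < length gs"
  shows "mu_insert_term p x gs qs (Suc r) 2 = sgnz (int r + 1)
     (nu (length gs) x (take r gs @ mul (gs ! r) (gs ! Suc r) # drop (Suc (Suc r)) gs))"
  unfolding mu_insert_term_def
proof (rule sgnz_cong_even)
  have "mu dA mul 2 (take 2 (drop r gs)) = mul (gs ! r) (gs ! Suc r)"
    using assms by (simp add: mu_def numeral_2_eq_2)
  moreover have i: "Suc r + (length gs + 1 - Suc r - 2) + 1 = length gs" using assms by simp
  ultimately show "nu (Suc r + (length gs + 1 - Suc r - 2) + 1) x
      (take (Suc r - 1) gs @ [mu dA mul 2 (take 2 (drop (Suc r - 1) gs))] @ drop (Suc r - 1 + 2) gs)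
    = nu (length gs) x (take r gs @ mul (gs ! r) (gs ! Suc r) # drop (Suc (Suc r)) gs)"
    by (simp only: i) (simp add: numeral_2_eq_2)
qed simp

lemma mu_insert_term_ge_3: "3 \<le> s \<Longrightarrow> mu_insert_term p x gs qs r s = 0"
  by (simp add: mu_insert_term_def mu_def nu_slot_zero)

lemma sum_mu_insert_terms_at:
  assumes "r \<le> length gs"
  shows "(\<Sum>s\<in>{1..length gs - r}. mu_insert_term p x gs qs (Suc r) s)
       = (if r < length gs then mu_insert_term p x gs qs (Suc r) 1 else 0)
       + (if Suc r < length gs then mu_insert_term p x gs qs (Suc r) 2 else 0)"
proof (cases "Suc r < length gs")
  case True
  then have "{1..length gs - r} = insert 1 (insert 2 {3..length gs - r})" by auto
  then show ?thesis using True by (simp add: mu_insert_term_ge_3)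
next
  case False
  then have "{1..length gs - r} = (if r < length gs then {1} else {})" by auto
  then show ?thesis using False by simp
qed

lemma sum_mu_insert_terms:
  "(\<Sum>r\<in>{1..length gs + 1}. \<Sum>s\<in>{1..length gs + 1 - r}. mu_insert_term p x gs qs r s)
   = nu_dA_terms p x gs qs + nu_mul_terms x gs"
proof -
  have "(\<Sum>r\<in>{1..length gs + 1}. \<Sum>s\<in>{1..length gs + 1 - r}. mu_insert_term p x gs qs r s)
      = (\<Sum>r\<le>length gs. \<Sum>s\<in>{1..length gs - r}. mu_insert_term p x gs qs (Suc r) s)"
    using sum.shift_bounds_cl_Suc_ivl[of "\<lambda>r. \<Sum>s\<in>{1..length gs + 1 - r}. mu_insert_term p x gs qs r s" 0 "length gs"]
    by (simp add: atLeast0AtMost)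
  also have "\<dots> = (\<Sum>r\<le>length gs. if r < length gs then mu_insert_term p x gs qs (Suc r) 1 else 0)
      + (\<Sum>r\<le>length gs. if Suc r < length gs then mu_insert_term p x gs qs (Suc r) 2 else 0)"
    unfolding sum.distrib[symmetric] by (rule sum.cong[OF refl], rule sum_mu_insert_terms_at) simp
  also have "\<dots> = (\<Sum>r<length gs. mu_insert_term p x gs qs (Suc r) 1)
      + (\<Sum>r<length gs - 1. mu_insert_term p x gs qs (Suc r) 2)"
    by (simp add: sum.inter_filter[symmetric]) (intro arg_cong2[where f = "(+)"] sum.cong; auto)
  also have "\<dots> = nu_dA_terms p x gs qs + nu_mul_terms x gs"
    unfolding nu_dA_terms_def nu_mul_terms_def
    by (intro arg_cong2[where f = "(+)"] sum.cong refl mu_insert_term_1 mu_insert_term_2) auto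
  finally show ?thesis .
qed

lemma module_relation_reduced:
  assumes "x \<in> gF p" and "homog_list gA gs qs"
  shows "nu_nu_terms x gs + nu_dA_terms p x gs qs + nu_mul_terms x gs = 0"
  using module_relation[OF assms]
  unfolding sum_nu_nu_eq_nu_nu_terms sum_mu_insert_terms by (simp add: add.assoc)

end

section \<open>The square of a twisted differential\<close>

locale twisted_family = connective_ainf_module +
  fixes C :: "'x set" and ii :: "'x \<Rightarrow> int" and M :: "'x \<Rightarrow> 'x \<Rightarrow> 'a" and K :: nat
  assumes finC: "finite C"
    and ii_nonneg: "\<And>c. c \<in> C \<Longrightarrow> 0 \<le> ii c"
    and ii_le: "\<And>c. c \<in> C \<Longrightarrow> ii c \<le> int K"
    and M_deg: "\<And>c c'. c \<in> C \<Longrightarrow> c' \<in> C \<Longrightarrow> M c c' \<in> gA (ii c - ii c' - 1)"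
begin

definition label_deg :: "'x \<Rightarrow> 'x \<Rightarrow> int" where
  "label_deg c c' = ii c - ii c' - 1"

abbreviation Madj where
  "Madj \<equiv> ctilde_adj M label_deg True C"

abbreviation path_elems :: "'x \<Rightarrow> 'x list \<Rightarrow> 'a list" where
  "path_elems c cs \<equiv> map fst (path_labels M label_deg c cs)"

definition curvature :: "'x \<Rightarrow> 'x \<Rightarrow> 'a" where
  "curvature c c' = dA (M c c') - (\<Sum>c''\<in>C. sgnz (ii c - ii c'') (mul (M c c'') (M c'' c')))"

text \<open>The coefficient at y of the twisted differential applied to a \<otimes> c, for a of degree p.
  Paths longer than K contribute nothing for degree reasons.\<close>

definition twisted_coeff where
  "twisted_coeff a p c y = (\<Sum>n\<le>K. (Madj ^^ n) (nu_at nu y) ((a, p), [], c))"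

lemma homog_path_labels:
  "c \<in> C \<Longrightarrow> set cs \<subseteq> C \<Longrightarrow> (g, q) \<in> set (path_labels M label_deg c cs) \<Longrightarrow> g \<in> gA q"
  by (induction cs arbitrary: c) (auto simp: label_deg_def M_deg)

lemma path_deg_label_deg: "path_deg label_deg c cs = ii c - ii (last (c # cs)) - int (length cs)"
  by (rule path_deg_telescope) (simp add: label_deg_def)

lemma path_deg_neg: "c \<in> C \<Longrightarrow> set cs \<subseteq> C \<Longrightarrow> K < length cs \<Longrightarrow> path_deg label_deg c cs < 0"
  using ii_le[of c] ii_nonneg[of "last (c # cs)"] last_Cons_in[of c C cs] by (simp add: path_deg_label_deg)

lemma twisted_coeff_eq_sum_paths: "twisted_coeff a p c y = (\<Sum>cs\<in>paths_upto C K.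
   sgnz (path_sign label_deg p c cs) (if last (c # cs) = y then nu (Suc (length cs)) a (path_elems c cs) else 0))"
proof -
  have "twisted_coeff a p c y = (\<Sum>n\<le>K. \<Sum>cs\<in>paths C n. sgnz (path_sign label_deg p c cs)
     (if last (c # cs) = y then nu (Suc (length cs)) a (path_elems c cs) else 0))"
    unfolding twisted_coeff_def ctilde_adj_pow_eq_sum_paths[OF finC] nu_at_simp by (simp cong: if_cong)
  then show ?thesis by (simp add: sum_paths_upto[OF finC])
qed

lemma twisted_coeff_sum: "twisted_coeff (\<Sum>i\<in>I. f i) q c y = (\<Sum>i\<in>I. twisted_coeff (f i) q c y)"
  unfolding twisted_coeff_eq_sum_paths
  by (simp add: nu_sum sgnz_sum if_zero_sum sum.swap[of _ I] cong: if_cong)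

lemma twisted_coeff_deg:
  assumes x: "x \<in> gF q" and cC: "c \<in> C"
  shows "twisted_coeff x q c y \<in> gF (q + ii c - ii y - 1)"
  unfolding twisted_coeff_eq_sum_paths
proof (intro graded_group_sum[OF graded_gF] graded_group_sgnz[OF graded_gF])
  fix cs assume "cs \<in> paths_upto C K"
  then have cs: "set cs \<subseteq> C" by (simp add: paths_upto_def)
  show "(if last (c # cs) = y then nu (Suc (length cs)) x (path_elems c cs) else 0) \<in> gF (q + ii c - ii y - 1)"
  proof (cases "last (c # cs) = y")
    case True
    have eq: "q + sum_list (map snd (path_labels M label_deg c cs)) + int (Suc (length (path_labels M label_deg c cs))) - 2
        = q + ii c - ii y - 1"
      using True by (simp add: sum_list_snd_path_labels path_deg_label_deg)
    have "nu (Suc (length (path_labels M label_deg c cs))) x (path_elems c cs)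
      \<in> gF (q + sum_list (map snd (path_labels M label_deg c cs)) + int (Suc (length (path_labels M label_deg c cs))) - 2)"
      by (rule nu_deg[OF x]) (rule homog_path_labels[OF cC cs])
    then show ?thesis
      using True unfolding eq by simp
  qed (simp add: graded_group_zero[OF graded_gF])
qed

context
  fixes a and p :: int and c :: 'x and y :: 'x
  assumes aF: "a \<in> gF p" and cC: "c \<in> C"
begin

definition nu_nu_total where
  "nu_nu_total = (\<Sum>es\<in>paths_upto C K. if last (c # es) = y
     then sgnz (path_sign label_deg p c es) (nu_nu_terms a (path_elems c es)) else 0)"

definition nu_dA_total where
  "nu_dA_total = (\<Sum>es\<in>paths_upto C K. if last (c # es) = y
     then sgnz (path_sign label_deg p c es)
       (nu_dA_terms p a (path_elems c es) (map snd (path_labels M label_deg c es))) else 0)"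

definition nu_mul_total where
  "nu_mul_total = (\<Sum>es\<in>paths_upto C K. if last (c # es) = y
     then sgnz (path_sign label_deg p c es) (nu_mul_terms a (path_elems c es)) else 0)"

lemma sum_totals_eq_0: "nu_nu_total + nu_dA_total + nu_mul_total = 0"
proof -
  have "nu_nu_total + nu_dA_total + nu_mul_total = (\<Sum>es\<in>paths_upto C K. if last (c # es) = y
      then sgnz (path_sign label_deg p c es) (nu_nu_terms a (path_elems c es)
        + nu_dA_terms p a (path_elems c es) (map snd (path_labels M label_deg c es))
        + nu_mul_terms a (path_elems c es)) else 0)"
    unfolding nu_nu_total_def nu_dA_total_def nu_mul_total_def sum.distrib[symmetric]
    by (rule sum.cong) (simp_all add: sgnz_add)
  also have "\<dots> = 0"
  proof (rule sum.neutral, rule ballI)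
    fix es assume "es \<in> paths_upto C K"
    then have "homog_list gA (path_elems c es) (map snd (path_labels M label_deg c es))"
      by (intro homog_list_map_fst_snd homog_path_labels[OF cC]) (auto simp: paths_upto_def)
    then show "(if last (c # es) = y then sgnz (path_sign label_deg p c es) (nu_nu_terms a (path_elems c es)
        + nu_dA_terms p a (path_elems c es) (map snd (path_labels M label_deg c es))
        + nu_mul_terms a (path_elems c es)) else 0) = 0"
      using module_relation_reduced[OF aF] by simp
  qed
  finally show ?thesis .
qed

definition nu_nu_term where
  "nu_nu_term cs ds = (if last (last (c # cs) # ds) = y then
     sgnz (path_sign label_deg p c (cs @ ds) + int (length cs + 1) * int (length ds))
       (nu (length ds + 1) (nu (length cs + 1) a (path_elems c cs)) (path_elems (last (c # cs)) ds))
   else 0)"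

lemma nu_nu_term_vanishes:
  assumes cs: "set cs \<subseteq> C" and ds: "set ds \<subseteq> C" and K: "K < length cs + length ds"
  shows "nu_nu_term cs ds = 0"
proof -
  let ?c1 = "last (c # cs)"
  have c1: "?c1 \<in> C" using last_Cons_in[OF cC cs] .
  have "path_deg label_deg c cs + path_deg label_deg ?c1 ds < 0"
    using path_deg_neg[OF cC, of "cs @ ds"] cs ds K by (simp add: path_deg_append)
  then consider "path_deg label_deg c cs < 0" | "path_deg label_deg ?c1 ds < 0" by linarith
  then show ?thesis
  proof cases
    case 1
    then have "nu (length cs + 1) a (path_elems c cs) = 0"
      by (intro nu_eq_0_if_deg_neg) (auto simp: sum_list_snd_path_labels intro: homog_path_labels[OF cC cs])
    then show ?thesis by (simp add: nu_nu_term_def nu_zero)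
  next
    case 2
    then have "nu (length ds + 1) (nu (length cs + 1) a (path_elems c cs)) (path_elems ?c1 ds) = 0"
      by (intro nu_eq_0_if_deg_neg) (auto simp: sum_list_snd_path_labels intro: homog_path_labels[OF c1 ds])
    then show ?thesis by (simp add: nu_nu_term_def)
  qed
qed

lemma nu_nu_total_eq: "nu_nu_total = (\<Sum>cs\<in>paths_upto C K. \<Sum>ds\<in>paths_upto C K. nu_nu_term cs ds)"
proof -
  define f where "f s es = (if last (c # es) = y then
      sgnz (path_sign label_deg p c es + int (s + 1) * int (length es - s))
        (nu (length es - s + 1) (nu (s + 1) a (take s (path_elems c es))) (drop s (path_elems c es)))
    else 0)" for s es
  have f_split: "f (length cs) (cs @ ds) = nu_nu_term cs ds" for cs ds
    unfolding f_def nu_nu_term_def by (simp add: path_labels_append last_Cons_append[symmetric] cong: if_cong)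
  have "nu_nu_total = (\<Sum>es\<in>paths_upto C K. \<Sum>s\<le>length es. f s es)"
    unfolding nu_nu_total_def nu_nu_terms_def f_def
    by (simp add: sgnz_sum sgnz_sgnz if_zero_sum cong: if_cong)
  also have "\<dots> = (\<Sum>cs\<in>paths_upto C K. \<Sum>ds\<in>paths_upto C K. f (length cs) (cs @ ds))"
    by (rule sum_paths_upto_split[OF finC]) (simp add: f_split nu_nu_term_vanishes)
  finally show ?thesis by (simp add: f_split)
qed

text \<open>The two Koszul signs of a composite agree with the sign of the concatenated path.\<close>

lemma composite_sign_even:
  "even ((path_sign label_deg (p + ii c - ii (last (c # cs)) - 1) (last (c # cs)) ds + path_sign label_deg p c cs)
     - (path_sign label_deg p c (cs @ ds) + int (length cs + 1) * int (length ds)))"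
proof -
  let ?c1 = "last (c # cs)"
  have q: "p + ii c - ii ?c1 - 1 = (p + path_deg label_deg c cs) + (int (length cs) - 1)"
    by (simp add: path_deg_label_deg)
  have "path_sign label_deg (p + ii c - ii ?c1 - 1) ?c1 ds
      = path_sign label_deg (p + path_deg label_deg c cs) ?c1 ds + (int (length cs) - 1) * int (length ds)"
    unfolding q by (rule path_sign_shift)
  then have "(path_sign label_deg (p + ii c - ii ?c1 - 1) ?c1 ds + path_sign label_deg p c cs)
     - (path_sign label_deg p c (cs @ ds) + int (length cs + 1) * int (length ds)) = 2 * (- int (length ds))"
    by (simp add: path_sign_append algebra_simps)
  then show ?thesis by simp
qed

lemma sum_twisted_coeff_twisted_coeff:
  "(\<Sum>c'\<in>C. twisted_coeff (twisted_coeff a p c c') (p + ii c - ii c' - 1) c' y)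
   = (\<Sum>cs\<in>paths_upto C K. \<Sum>ds\<in>paths_upto C K. nu_nu_term cs ds)"
proof -
  define g where "g c' ds cs = (if last (c' # ds) = y then (if last (c # cs) = c' then
      sgnz (path_sign label_deg (p + ii c - ii c' - 1) c' ds + path_sign label_deg p c cs)
        (nu (Suc (length ds)) (nu (Suc (length cs)) a (path_elems c cs)) (path_elems c' ds)) else 0) else 0)"
    for c' ds cs
  have "twisted_coeff (twisted_coeff a p c c') (p + ii c - ii c' - 1) c' y
      = (\<Sum>ds\<in>paths_upto C K. \<Sum>cs\<in>paths_upto C K. g c' ds cs)" for c'
    unfolding twisted_coeff_eq_sum_paths[of _ _ c'] twisted_coeff_eq_sum_paths[of _ _ c] g_def
    by (simp add: nu_sum nu_sgnz nu_if_zero sgnz_sum sgnz_sgnz sgnz_if_zero if_zero_sum cong: if_cong)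
  then have "(\<Sum>c'\<in>C. twisted_coeff (twisted_coeff a p c c') (p + ii c - ii c' - 1) c' y)
      = (\<Sum>c'\<in>C. \<Sum>ds\<in>paths_upto C K. \<Sum>cs\<in>paths_upto C K. g c' ds cs)"
    by simp
  also have "\<dots> = (\<Sum>ds\<in>paths_upto C K. \<Sum>cs\<in>paths_upto C K. \<Sum>c'\<in>C. g c' ds cs)"
    by (subst sum.swap) (simp only: sum.swap[of _ C])
  also have "\<dots> = (\<Sum>cs\<in>paths_upto C K. \<Sum>ds\<in>paths_upto C K. \<Sum>c'\<in>C. g c' ds cs)"
    by (rule sum.swap)
  also have "\<dots> = (\<Sum>cs\<in>paths_upto C K. \<Sum>ds\<in>paths_upto C K. nu_nu_term cs ds)"
  proof (intro sum.cong refl)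
    fix cs ds assume "cs \<in> paths_upto C K"
    then have c1: "last (c # cs) \<in> C" by (intro last_Cons_in[OF cC]) (simp add: paths_upto_def)
    have "(\<Sum>c'\<in>C. g c' ds cs) = (\<Sum>c'\<in>C. if c' = last (c # cs) then g c' ds cs else 0)"
      by (rule sum.cong) (auto simp: g_def)
    also have "\<dots> = g (last (c # cs)) ds cs"
      using c1 finC by simp
    also have "\<dots> = nu_nu_term cs ds"
      unfolding g_def nu_nu_term_def sgnz_cong_even[OF composite_sign_even refl] by simp
    finally show "(\<Sum>c'\<in>C. g c' ds cs) = nu_nu_term cs ds" .
  qed
  finally show ?thesis .
qed

definition nu_dA_term where
  "nu_dA_term cs c2 ds = (if last (c2 # ds) = y then
     sgnz (path_sign label_deg p c (cs @ c2 # ds) + (int (length cs + length ds + 1) + p + path_deg label_deg c cs))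
       (nu (length cs + length ds + 2) a (path_elems c cs @ dA (M (last (c # cs)) c2) # path_elems c2 ds))
   else 0)"

definition nu_mul_term where
  "nu_mul_term cs c1 c2 ds = (if last (c2 # ds) = y then
     sgnz (path_sign label_deg p c (cs @ c1 # c2 # ds) + (int (length cs) + 1))
       (nu (length cs + length ds + 2) a (path_elems c cs @ mul (M (last (c # cs)) c1) (M c1 c2) # path_elems c2 ds))
   else 0)"

definition curvature_term where
  "curvature_term cs c2 ds = (if last (c2 # ds) = y then
     sgnz (int (length cs) + path_sign label_deg p c cs
           + path_sign label_deg (p + path_deg label_deg c cs + label_deg (last (c # cs)) c2 - 1) c2 ds)
       (nu (Suc (Suc (length cs + length ds))) a (path_elems c cs @ curvature (last (c # cs)) c2 # path_elems c2 ds))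
   else 0)"

lemma nu_dA_term_vanishes:
  assumes cs: "set cs \<subseteq> C" and c2: "c2 \<in> C" and ds: "set ds \<subseteq> C" and K: "K < length cs + length ds + 1"
  shows "nu_dA_term cs c2 ds = 0"
proof -
  let ?c1 = "last (c # cs)"
  have c1: "?c1 \<in> C" using last_Cons_in[OF cC cs] .
  let ?L = "path_labels M label_deg c cs @ (dA (M ?c1 c2), label_deg ?c1 c2 - 1) # path_labels M label_deg c2 ds"
  have "dA (M ?c1 c2) \<in> gA (label_deg ?c1 c2 - 1)"
    using dA_deg[OF M_deg[OF c1 c2]] by (simp add: label_deg_def)
  then have "g \<in> gA q" if "(g, q) \<in> set ?L" for g q
    using that homog_path_labels[OF cC cs] homog_path_labels[OF c2 ds] by auto
  moreover have "sum_list (map snd ?L) < 0"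
    using path_deg_neg[OF cC, of "cs @ c2 # ds"] cs ds c2 K
    by (simp add: sum_list_snd_path_labels path_deg_split_at_vertex)
  ultimately have "nu (length cs + length ds + 2) a (map fst ?L) = 0"
    by (rule nu_eq_0_if_deg_neg)
  then show ?thesis by (simp add: nu_dA_term_def)
qed

lemma nu_dA_total_eq: "nu_dA_total = (\<Sum>cs\<in>paths_upto C K. \<Sum>c2\<in>C. \<Sum>ds\<in>paths_upto C K. nu_dA_term cs c2 ds)"
proof -
  define f where "f r es = (if last (c # es) = y then
      sgnz (path_sign label_deg p c es + (int (length es) + p + sum_list (take r (map snd (path_labels M label_deg c es)))))
        (nu (length es + 1) a (take r (path_elems c es) @ dA (path_elems c es ! r) # drop (Suc r) (path_elems c es)))
    else 0)" for r es
  have f_split: "f (length cs) (cs @ c2 # ds) = nu_dA_term cs c2 ds" for cs c2 ds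
    unfolding f_def nu_dA_term_def path_labels_split_at_vertex
    by (simp add: last_ConsR last_appendR sum_list_snd_path_labels nth_append cong: if_cong)
  have "nu_dA_total = (\<Sum>es\<in>paths_upto C K. \<Sum>r<length es. f r es)"
    unfolding nu_dA_total_def nu_dA_terms_def f_def
    by (simp add: sgnz_sum sgnz_sgnz if_zero_sum cong: if_cong)
  also have "\<dots> = (\<Sum>cs\<in>paths_upto C K. \<Sum>c2\<in>C. \<Sum>ds\<in>paths_upto C K. f (length cs) (cs @ c2 # ds))"
    by (rule sum_paths_upto_split_at_vertex[OF finC]) (simp add: f_split nu_dA_term_vanishes)
  finally show ?thesis by (simp add: f_split)
qed

lemma nu_mul_term_vanishes:
  assumes cs: "set cs \<subseteq> C" and c1: "c1 \<in> C" and c2: "c2 \<in> C" and ds: "set ds \<subseteq> C"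
    and K: "K < length cs + length ds + 2"
  shows "nu_mul_term cs c1 c2 ds = 0"
proof -
  let ?c0 = "last (c # cs)"
  have c0: "?c0 \<in> C" using last_Cons_in[OF cC cs] .
  let ?L = "path_labels M label_deg c cs @ (mul (M ?c0 c1) (M c1 c2), label_deg ?c0 c1 + label_deg c1 c2)
    # path_labels M label_deg c2 ds"
  have "mul (M ?c0 c1) (M c1 c2) \<in> gA (label_deg ?c0 c1 + label_deg c1 c2)"
    using mul_deg[OF M_deg[OF c0 c1] M_deg[OF c1 c2]] by (simp add: label_deg_def)
  then have "g \<in> gA q" if "(g, q) \<in> set ?L" for g q
    using that homog_path_labels[OF cC cs] homog_path_labels[OF c2 ds] by auto
  moreover have "sum_list (map snd ?L) < 0"
    using path_deg_neg[OF cC, of "cs @ c1 # c2 # ds"] cs ds c1 c2 K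
    by (simp add: sum_list_snd_path_labels path_deg_split_at_edge)
  ultimately have "nu (length cs + length ds + 2) a (map fst ?L) = 0"
    by (rule nu_eq_0_if_deg_neg)
  then show ?thesis by (simp add: nu_mul_term_def)
qed

lemma nu_mul_total_eq:
  "nu_mul_total = (\<Sum>cs\<in>paths_upto C K. \<Sum>c2\<in>C. \<Sum>ds\<in>paths_upto C K. \<Sum>c1\<in>C. nu_mul_term cs c1 c2 ds)"
proof -
  define f where "f r es = (if last (c # es) = y then
      sgnz (path_sign label_deg p c es + (int r + 1))
        (nu (length es) a (take r (path_elems c es) @ mul (path_elems c es ! r) (path_elems c es ! Suc r)
          # drop (Suc (Suc r)) (path_elems c es)))
    else 0)" for r es
  have f_split: "f (length cs) (cs @ c1 # c2 # ds) = nu_mul_term cs c1 c2 ds" for cs c1 c2 ds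
    unfolding f_def nu_mul_term_def path_labels_split_at_edge
    by (simp add: last_ConsR last_appendR nth_append cong: if_cong)
  have "nu_mul_total = (\<Sum>es\<in>paths_upto C K. \<Sum>r<length es - 1. f r es)"
    unfolding nu_mul_total_def nu_mul_terms_def f_def
    by (simp add: sgnz_sum sgnz_sgnz if_zero_sum cong: if_cong)
  also have "\<dots> = (\<Sum>cs\<in>paths_upto C K. \<Sum>c1\<in>C. \<Sum>c2\<in>C. \<Sum>ds\<in>paths_upto C K. nu_mul_term cs c1 c2 ds)"
    by (subst sum_paths_upto_split_at_edge[OF finC]) (simp_all add: f_split nu_mul_term_vanishes)
  also have "\<dots> = (\<Sum>cs\<in>paths_upto C K. \<Sum>c2\<in>C. \<Sum>ds\<in>paths_upto C K. \<Sum>c1\<in>C. nu_mul_term cs c1 c2 ds)"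
  proof (rule sum.cong[OF refl])
    fix cs
    have "(\<Sum>c1\<in>C. \<Sum>c2\<in>C. \<Sum>ds\<in>paths_upto C K. nu_mul_term cs c1 c2 ds)
        = (\<Sum>c2\<in>C. \<Sum>c1\<in>C. \<Sum>ds\<in>paths_upto C K. nu_mul_term cs c1 c2 ds)"
      by (rule sum.swap)
    also have "\<dots> = (\<Sum>c2\<in>C. \<Sum>ds\<in>paths_upto C K. \<Sum>c1\<in>C. nu_mul_term cs c1 c2 ds)"
      by (rule sum.cong[OF refl], rule sum.swap)
    finally show "(\<Sum>c1\<in>C. \<Sum>c2\<in>C. \<Sum>ds\<in>paths_upto C K. nu_mul_term cs c1 c2 ds)
        = (\<Sum>c2\<in>C. \<Sum>ds\<in>paths_upto C K. \<Sum>c1\<in>C. nu_mul_term cs c1 c2 ds)" .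
  qed
  finally show ?thesis .
qed

lemma curvature_term_sign_odd:
  "odd ((path_sign label_deg p c (cs @ c2 # ds) + (int (length cs + length ds + 1) + p + path_deg label_deg c cs))
     - (int (length cs) + path_sign label_deg p c cs
        + path_sign label_deg (p + path_deg label_deg c cs + label_deg (last (c # cs)) c2 - 1) c2 ds))"
proof -
  let ?D = "p + path_deg label_deg c cs + label_deg (last (c # cs)) c2"
  have shift: "path_sign label_deg (?D - 1) c2 ds = path_sign label_deg ?D c2 ds - int (length ds)"
    using path_sign_shift[of label_deg ?D "-1" c2 ds] by simp
  have diff: "(path_sign label_deg p c (cs @ c2 # ds) + (int (length cs + length ds + 1) + p + path_deg label_deg c cs))
     - (int (length cs) + path_sign label_deg p c cs + path_sign label_deg (?D - 1) c2 ds)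
     = 2 * (p + path_deg label_deg c cs + int (length ds)) + 1"
    unfolding path_sign_split_at_vertex shift by (simp add: algebra_simps)
  show ?thesis unfolding diff by simp
qed

lemma nu_mul_term_sign_odd:
  "odd ((path_sign label_deg p c (cs @ c2 # ds) + (int (length cs + length ds + 1) + p + path_deg label_deg c cs)
          + (ii (last (c # cs)) - ii c1))
     - (path_sign label_deg p c (cs @ c1 # c2 # ds) + (int (length cs) + 1)))"
proof -
  let ?c0 = "last (c # cs)"
  let ?D = "p + path_deg label_deg c cs + label_deg ?c0 c2"
  have D: "p + path_deg label_deg c cs + label_deg ?c0 c1 + label_deg c1 c2 = ?D + (-1)"
    by (simp add: label_deg_def)
  have shift: "path_sign label_deg (p + path_deg label_deg c cs + label_deg ?c0 c1 + label_deg c1 c2) c2 ds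
      = path_sign label_deg ?D c2 ds - int (length ds)"
    unfolding D path_sign_shift by simp
  have diff: "((path_sign label_deg p c (cs @ c2 # ds) + (int (length cs + length ds + 1) + p + path_deg label_deg c cs))
          + (ii ?c0 - ii c1))
     - (path_sign label_deg p c (cs @ c1 # c2 # ds) + (int (length cs) + 1)) = 2 * int (length ds) + 1"
    unfolding path_sign_split_at_edge shift unfolding path_sign_split_at_vertex
    by (simp add: label_deg_def algebra_simps)
  show ?thesis unfolding diff by simp
qed

text \<open>Expanding dA of the label through the curvature, its quadratic part cancels the
  nu_mul terms.\<close>

lemma nu_dA_term_eq:
  "nu_dA_term cs c2 ds = - curvature_term cs c2 ds - (\<Sum>c1\<in>C. nu_mul_term cs c1 c2 ds)"
proof (cases "last (c2 # ds) = y")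
  case True
  let ?c0 = "last (c # cs)"
  let ?s = "path_sign label_deg p c (cs @ c2 # ds) + (int (length cs + length ds + 1) + p + path_deg label_deg c cs)"
  let ?nu = "\<lambda>g. nu (length cs + length ds + 2) a (path_elems c cs @ g # path_elems c2 ds)"
  have dA_M: "dA (M ?c0 c2) = curvature ?c0 c2 + (\<Sum>c1\<in>C. sgnz (ii ?c0 - ii c1) (mul (M ?c0 c1) (M c1 c2)))"
    by (simp add: curvature_def)
  have "nu_dA_term cs c2 ds
      = sgnz ?s (?nu (curvature ?c0 c2)) + (\<Sum>c1\<in>C. sgnz (?s + (ii ?c0 - ii c1)) (?nu (mul (M ?c0 c1) (M c1 c2))))"
    unfolding nu_dA_term_def dA_M
    using True by (simp add: nu_slot_add nu_slot_sum nu_slot_sgnz sgnz_add sgnz_sum sgnz_sgnz)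
  also have "sgnz ?s (?nu (curvature ?c0 c2)) = - curvature_term cs c2 ds"
    unfolding curvature_term_def using True
    by (simp only: simp_thms if_True) (rule sgnz_cong_odd[OF curvature_term_sign_odd], simp)
  also have "(\<Sum>c1\<in>C. sgnz (?s + (ii ?c0 - ii c1)) (?nu (mul (M ?c0 c1) (M c1 c2))))
      = - (\<Sum>c1\<in>C. nu_mul_term cs c1 c2 ds)"
  proof -
    have "sgnz (?s + (ii ?c0 - ii c1)) (?nu (mul (M ?c0 c1) (M c1 c2))) = - nu_mul_term cs c1 c2 ds" for c1
      unfolding nu_mul_term_def using True
      by (simp only: simp_thms if_True) (rule sgnz_cong_odd[OF nu_mul_term_sign_odd], simp)
    then show ?thesis by (simp add: sum_negf)
  qed
  finally show ?thesis by simp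
qed (simp add: nu_dA_term_def curvature_term_def nu_mul_term_def)

lemma curvature_insertion_eq_sum_paths:
  "sgnz (int i) ((Madj ^^ i) (ctilde_adj curvature (\<lambda>c c'. label_deg c c' - 1) False C
     ((Madj ^^ j) (nu_at nu y))) ((a, p), [], c))
   = (\<Sum>cs\<in>paths C i. \<Sum>c2\<in>C. \<Sum>ds\<in>paths C j. curvature_term cs c2 ds)"
proof -
  have "sgnz (int i) ((Madj ^^ i) (ctilde_adj curvature (\<lambda>c c'. label_deg c c' - 1) False C
     ((Madj ^^ j) (nu_at nu y))) ((a, p), [], c))
   = (\<Sum>cs\<in>paths C i. \<Sum>c2\<in>C. \<Sum>ds\<in>paths C j.
       sgnz (int i + (path_sign label_deg p c cs
         + path_sign label_deg (p + (path_deg label_deg c cs + (label_deg (last (c # cs)) c2 - 1))) c2 ds))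
       (if last (c2 # ds) = y
        then nu (Suc (Suc (length cs + length ds))) a
          (path_elems c cs @ curvature (last (c # cs)) c2 # path_elems c2 ds)
        else 0))"
    unfolding ctilde_adj_pow_eq_sum_paths[OF finC] ctilde_adj_simp nu_at_simp
    by (simp add: sum_list_snd_path_labels sgnz_sum sgnz_sgnz sgnz_if_zero cong: if_cong)
  also have "\<dots> = (\<Sum>cs\<in>paths C i. \<Sum>c2\<in>C. \<Sum>ds\<in>paths C j. curvature_term cs c2 ds)"
  proof (intro sum.cong refl)
    fix cs c2 ds assume "cs \<in> paths C i"
    then have l: "length cs = i" by (simp add: paths_def)
    have e: "p + (path_deg label_deg c cs + (label_deg (last (c # cs)) c2 - 1))
        = p + path_deg label_deg c cs + label_deg (last (c # cs)) c2 - 1" by simp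
    show "sgnz (int i + (path_sign label_deg p c cs
         + path_sign label_deg (p + (path_deg label_deg c cs + (label_deg (last (c # cs)) c2 - 1))) c2 ds))
       (if last (c2 # ds) = y
        then nu (Suc (Suc (length cs + length ds))) a
          (path_elems c cs @ curvature (last (c # cs)) c2 # path_elems c2 ds)
        else 0) = curvature_term cs c2 ds"
      unfolding curvature_term_def e l by (simp add: add.assoc)
  qed
  finally show ?thesis .
qed

lemma sum_curvature_insertions:
  "(\<Sum>i\<le>K. \<Sum>j\<le>K. sgnz (int i) ((Madj ^^ i) (ctilde_adj curvature (\<lambda>c c'. label_deg c c' - 1) False C
     ((Madj ^^ j) (nu_at nu y))) ((a, p), [], c)))
   = (\<Sum>cs\<in>paths_upto C K. \<Sum>c2\<in>C. \<Sum>ds\<in>paths_upto C K. curvature_term cs c2 ds)"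
proof -
  have "(\<Sum>i\<le>K. \<Sum>j\<le>K. sgnz (int i) ((Madj ^^ i) (ctilde_adj curvature (\<lambda>c c'. label_deg c c' - 1) False C
     ((Madj ^^ j) (nu_at nu y))) ((a, p), [], c)))
    = (\<Sum>i\<le>K. \<Sum>j\<le>K. \<Sum>cs\<in>paths C i. \<Sum>c2\<in>C. \<Sum>ds\<in>paths C j. curvature_term cs c2 ds)"
    by (simp only: curvature_insertion_eq_sum_paths)
  also have "\<dots> = (\<Sum>i\<le>K. \<Sum>cs\<in>paths C i. \<Sum>c2\<in>C. \<Sum>j\<le>K. \<Sum>ds\<in>paths C j. curvature_term cs c2 ds)"
    by (intro sum.cong refl, subst sum.swap) (intro sum.cong refl sum.swap)
  also have "\<dots> = (\<Sum>cs\<in>paths_upto C K. \<Sum>c2\<in>C. \<Sum>ds\<in>paths_upto C K. curvature_term cs c2 ds)"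
    by (simp only: sum_paths_upto[OF finC])
  finally show ?thesis .
qed

lemma twisted_square_eq_curvature_insertions:
  "(\<Sum>c'\<in>C. twisted_coeff (twisted_coeff a p c c') (p + ii c - ii c' - 1) c' y)
   = (\<Sum>i\<le>K. \<Sum>j\<le>K. sgnz (int i) ((Madj ^^ i) (ctilde_adj curvature (\<lambda>c c'. label_deg c c' - 1) False C
       ((Madj ^^ j) (nu_at nu y))) ((a, p), [], c)))"
proof -
  have "nu_dA_total = - (\<Sum>cs\<in>paths_upto C K. \<Sum>c2\<in>C. \<Sum>ds\<in>paths_upto C K. curvature_term cs c2 ds) - nu_mul_total"
    unfolding nu_dA_total_eq nu_dA_term_eq nu_mul_total_eq by (simp add: sum_subtractf sum_negf)
  then have "nu_nu_total = (\<Sum>cs\<in>paths_upto C K. \<Sum>c2\<in>C. \<Sum>ds\<in>paths_upto C K. curvature_term cs c2 ds)"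
    using sum_totals_eq_0 by (simp add: algebra_simps)
  then show ?thesis
    unfolding sum_twisted_coeff_twisted_coeff sum_curvature_insertions nu_nu_total_eq .
qed

end

end

section \<open>The cone built from m^0, h and m^1\<close>

locale homotopy_data = connective_ainf_module +
  fixes C0 :: "'c::linorder set" and ind0 :: "'c \<Rightarrow> nat" and m0 :: "'c \<Rightarrow> 'c \<Rightarrow> 'a"
    and C1 :: "'d::linorder set" and ind1 :: "'d \<Rightarrow> nat" and m1 :: "'d \<Rightarrow> 'd \<Rightarrow> 'a"
    and tau tau' h :: "'c \<Rightarrow> 'd \<Rightarrow> 'a"
  assumes fin0: "finite C0" and fin1: "finite C1"
    and m0: "twisting_cocycle gA dA mul C0 ind0 m0"
    and m1: "twisting_cocycle gA dA mul C1 ind1 m1"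
    and tau: "tau_family gA dA mul C0 ind0 m0 C1 ind1 m1 tau"
    and tau': "tau_family gA dA mul C0 ind0 m0 C1 ind1 m1 tau'"
    and h: "homotopy_family gA dA mul C0 ind0 m0 C1 ind1 m1 tau tau' h"
begin

text \<open>Shifting the indices of C0 up by two gives h the degree of a twisting cocycle entry.\<close>

definition cone_crit :: "('c + 'd) set" where
  "cone_crit = Inl ` C0 \<union> Inr ` C1"

definition cone_ind :: "'c + 'd \<Rightarrow> int" where
  "cone_ind = case_sum (\<lambda>x. int (ind0 x) + 2) (\<lambda>y. int (ind1 y))"

definition cone_family :: "'c + 'd \<Rightarrow> 'c + 'd \<Rightarrow> 'a" where
  "cone_family u v = (case u of
      Inl x \<Rightarrow> (case v of Inl x' \<Rightarrow> m0 x x' | Inr y \<Rightarrow> h x y)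
    | Inr y \<Rightarrow> (case v of Inl x' \<Rightarrow> 0 | Inr y' \<Rightarrow> m1 y y'))"

definition cone_bound :: nat where
  "cone_bound = sum ind0 C0 + sum ind1 C1 + 2"

lemma cone_ind_simps [simp]: "cone_ind (Inl x) = int (ind0 x) + 2" "cone_ind (Inr y) = int (ind1 y)"
  by (simp_all add: cone_ind_def)

lemma cone_family_simps [simp]:
  "cone_family (Inl x) (Inl x') = m0 x x'" "cone_family (Inl x) (Inr y) = h x y"
  "cone_family (Inr y) (Inl x) = 0" "cone_family (Inr y) (Inr y') = m1 y y'"
  by (simp_all add: cone_family_def)

lemma Inl_in_cone_crit [simp]: "Inl x \<in> cone_crit \<longleftrightarrow> x \<in> C0"
  and Inr_in_cone_crit [simp]: "Inr y \<in> cone_crit \<longleftrightarrow> y \<in> C1"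
  by (auto simp: cone_crit_def)

lemma sum_cone_crit: "sum f cone_crit = (\<Sum>x\<in>C0. f (Inl x)) + (\<Sum>y\<in>C1. f (Inr y))"
proof -
  have "sum f cone_crit = sum f (Inl ` C0) + sum f (Inr ` C1)"
    unfolding cone_crit_def by (rule sum.union_disjoint) (auto simp: fin0 fin1)
  then show ?thesis by (simp add: sum.reindex)
qed

lemma ind0_le_cone_bound: "x \<in> C0 \<Longrightarrow> ind0 x + 2 \<le> cone_bound"
  using member_le_sum[of x C0 ind0] fin0 by (simp add: cone_bound_def)

lemma ind1_le_cone_bound: "y \<in> C1 \<Longrightarrow> ind1 y \<le> cone_bound"
  using member_le_sum[of y C1 ind1] fin1 by (simp add: cone_bound_def)

lemma m0_deg: "x \<in> C0 \<Longrightarrow> x' \<in> C0 \<Longrightarrow> m0 x x' \<in> gA (int (ind0 x) - int (ind0 x') - 1)"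
  using m0 by (simp add: twisting_cocycle_def)

lemma m1_deg: "y \<in> C1 \<Longrightarrow> y' \<in> C1 \<Longrightarrow> m1 y y' \<in> gA (int (ind1 y) - int (ind1 y') - 1)"
  using m1 by (simp add: twisting_cocycle_def)

lemma h_deg: "x \<in> C0 \<Longrightarrow> y \<in> C1 \<Longrightarrow> h x y \<in> gA (int (ind0 x) - int (ind1 y) + 1)"
  using h by (simp add: homotopy_family_def)

lemma tau_family_deg:
  "tau_family gA dA mul C0 ind0 m0 C1 ind1 m1 t \<Longrightarrow> x \<in> C0 \<Longrightarrow> y \<in> C1 \<Longrightarrow> t x y \<in> gA (int (ind0 x) - int (ind1 y))"
  by (simp add: tau_family_def)

lemma cone_family_deg:
  assumes "u \<in> cone_crit" and "v \<in> cone_crit"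
  shows "cone_family u v \<in> gA (cone_ind u - cone_ind v - 1)"
  using assms
  using h_deg by (cases u; cases v) (auto simp: cone_crit_def gA_zero m0_deg m1_deg add.commute)

sublocale cone: twisted_family gA dA mul gF nu cone_crit cone_ind cone_family cone_bound
proof
  show "finite cone_crit" by (simp add: cone_crit_def fin0 fin1)
  show "0 \<le> cone_ind u" if "u \<in> cone_crit" for u
    using that by (auto simp: cone_crit_def)
  show "cone_ind u \<le> int cone_bound" if "u \<in> cone_crit" for u
    using that ind0_le_cone_bound ind1_le_cone_bound by (force simp: cone_crit_def)
qed (rule cone_family_deg)

abbreviation "m0_adj \<equiv> ctilde_adj m0 (\<lambda>x y. int (ind0 x) - int (ind0 y) - 1) True C0"
abbreviation "m1_adj \<equiv> ctilde_adj m1 (\<lambda>x y. int (ind1 x) - int (ind1 y) - 1) True C1"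
abbreviation "h_adj \<equiv> ctilde_adj h (\<lambda>x y. int (ind0 x) - int (ind1 y) + 1) True C1"
abbreviation "tau_adj t \<equiv> ctilde_adj t (\<lambda>x y. int (ind0 x) - int (ind1 y)) False C1"

definition "d0_coeff a p x x' = fsum (\<lambda>n. (m0_adj ^^ n) (nu_at nu x') ((a, p), [], x))"

definition "d1_coeff a p w y = fsum (\<lambda>n. (m1_adj ^^ n) (nu_at nu y) ((a, p), [], w))"

definition "Psi_coeff t a p x y = fsum (\<lambda>n. \<Sum>u\<in>{1..n}. sgnz (int u - 1)
   ((m0_adj ^^ (u - 1)) (tau_adj t ((m1_adj ^^ (n - u)) (nu_at nu y))) ((a, p), [], x)))"

definition "H_coeff a p x y = fsum (\<lambda>n. \<Sum>u\<in>{1..n}.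
   ((m0_adj ^^ (u - 1)) (h_adj ((m1_adj ^^ (n - u)) (nu_at nu y))) ((a, p), [], x)))"

lemma tensor_eval_ctilde_m0: "tensor_eval \<Phi> (ctilde (- 1) ind0 ind0 C0 m0 ws) = tensor_eval (m0_adj \<Phi>) ws"
  using tensor_eval_ctilde[OF fin0, of \<Phi> "- 1" ind0 ind0 m0 ws] by simp

lemma tensor_eval_ctilde_m1: "tensor_eval \<Phi> (ctilde (- 1) ind1 ind1 C1 m1 ws) = tensor_eval (m1_adj \<Phi>) ws"
  using tensor_eval_ctilde[OF fin1, of \<Phi> "- 1" ind1 ind1 m1 ws] by simp

lemma tensor_eval_ctilde_h: "tensor_eval \<Phi> (ctilde 1 ind0 ind1 C1 h ws) = tensor_eval (h_adj \<Phi>) ws"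
  using tensor_eval_ctilde[OF fin1, of \<Phi> 1 ind0 ind1 h ws] by simp

lemma tensor_eval_ctilde_tau: "tensor_eval \<Phi> (ctilde 0 ind0 ind1 C1 t ws) = tensor_eval (tau_adj t \<Phi>) ws"
  using tensor_eval_ctilde[OF fin1, of \<Phi> 0 ind0 ind1 t ws] by simp

lemma twisted_diff0_eq: "twisted_diff nu C0 ind0 m0 N phi x' = (\<Sum>x\<in>C0. d0_coeff (phi x) (N - int (ind0 x)) x x')"
  unfolding twisted_diff_def lin_ext_def d0_coeff_def nu_eval_eq_tensor_eval
    tensor_eval_funpow[OF tensor_eval_ctilde_m0] tensor_eval_gen ..

lemma twisted_diff1_eq: "twisted_diff nu C1 ind1 m1 N psi y = (\<Sum>w\<in>C1. d1_coeff (psi w) (N - int (ind1 w)) w y)"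
  unfolding twisted_diff_def lin_ext_def d1_coeff_def nu_eval_eq_tensor_eval
    tensor_eval_funpow[OF tensor_eval_ctilde_m1] tensor_eval_gen ..

lemma Psi_map_eq: "Psi_map nu C0 ind0 m0 C1 ind1 m1 t N phi y = (\<Sum>x\<in>C0. Psi_coeff t (phi x) (N - int (ind0 x)) x y)"
  unfolding Psi_map_def lin_ext_def Psi_coeff_def nu_eval_eq_tensor_eval tensor_eval_funpow[OF tensor_eval_ctilde_m1]
    tensor_eval_ctilde_tau tensor_eval_funpow[OF tensor_eval_ctilde_m0] tensor_eval_gen ..

lemma H_map_eq: "H_map nu C0 ind0 m0 C1 ind1 m1 h N phi y = (\<Sum>x\<in>C0. H_coeff (phi x) (N - int (ind0 x)) x y)"
  unfolding H_map_def lin_ext_def H_coeff_def nu_eval_eq_tensor_eval tensor_eval_funpow[OF tensor_eval_ctilde_m1]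
    tensor_eval_ctilde_h tensor_eval_funpow[OF tensor_eval_ctilde_m0] tensor_eval_gen ..

definition restrict_Inl :: "(('f \<times> int) \<times> ('a \<times> int) list \<times> ('c + 'd) \<Rightarrow> 'g) \<Rightarrow> ('f \<times> int) \<times> ('a \<times> int) list \<times> 'c \<Rightarrow> 'g" where
  "restrict_Inl \<Phi> t = (case t of (ap, gs, x) \<Rightarrow> \<Phi> (ap, gs, Inl x))"

definition restrict_Inr :: "(('f \<times> int) \<times> ('a \<times> int) list \<times> ('c + 'd) \<Rightarrow> 'g) \<Rightarrow> ('f \<times> int) \<times> ('a \<times> int) list \<times> 'd \<Rightarrow> 'g" where
  "restrict_Inr \<Phi> t = (case t of (ap, gs, y) \<Rightarrow> \<Phi> (ap, gs, Inr y))"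

abbreviation "curvature_adj \<equiv> ctilde_adj cone.curvature (\<lambda>c c'. cone.label_deg c c' - 1) False cone_crit"

lemma restrict_Inl_Madj: "restrict_Inl (cone.Madj \<Phi>) t = m0_adj (restrict_Inl \<Phi>) t + h_adj (restrict_Inr \<Phi>) t"
  by (cases t) (simp add: restrict_Inl_def restrict_Inr_def ctilde_adj_simp sum_cone_crit cone.label_deg_def algebra_simps)

lemma restrict_Inr_Madj:
  "slot_additive \<Phi> \<Longrightarrow> restrict_Inr (cone.Madj \<Phi>) t = m1_adj (restrict_Inr \<Phi>) t"
  by (cases t) (simp add: restrict_Inl_def restrict_Inr_def ctilde_adj_simp sum_cone_crit cone.label_deg_def
      algebra_simps slot_additive_zero_last)

lemma restrict_Inr_Madj_pow:
  "slot_additive \<Phi> \<Longrightarrow> restrict_Inr ((cone.Madj ^^ n) \<Phi>) = (m1_adj ^^ n) (restrict_Inr \<Phi>)"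
proof (induction n)
  case (Suc n)
  have "slot_additive ((cone.Madj ^^ n) \<Phi>)" by (rule slot_additive_ctilde_adj_pow[OF Suc.prems])
  then show ?case by (intro ext) (simp add: restrict_Inr_Madj Suc)
qed simp

text \<open>Since M is block upper triangular, a path starting in C0 may switch to C1 only once,
  through an entry of h.\<close>

lemma restrict_Inl_Madj_pow:
  assumes "slot_additive \<Phi>"
  shows "restrict_Inl ((cone.Madj ^^ n) \<Phi>)
    = (\<lambda>t. (m0_adj ^^ n) (restrict_Inl \<Phi>) t + (\<Sum>u<n. (m0_adj ^^ u) (h_adj ((m1_adj ^^ (n - 1 - u)) (restrict_Inr \<Phi>))) t))"
proof (induction n)
  case (Suc n)
  show ?case
  proof
    fix t
    have "restrict_Inl ((cone.Madj ^^ Suc n) \<Phi>) t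
        = m0_adj (restrict_Inl ((cone.Madj ^^ n) \<Phi>)) t + h_adj (restrict_Inr ((cone.Madj ^^ n) \<Phi>)) t"
      by (simp add: restrict_Inl_Madj)
    also have "\<dots> = m0_adj (\<lambda>t. (m0_adj ^^ n) (restrict_Inl \<Phi>) t
          + (\<Sum>u<n. (m0_adj ^^ u) (h_adj ((m1_adj ^^ (n - 1 - u)) (restrict_Inr \<Phi>))) t)) t
        + h_adj ((m1_adj ^^ n) (restrict_Inr \<Phi>)) t"
      by (simp only: Suc.IH restrict_Inr_Madj_pow[OF assms])
    also have "\<dots> = (m0_adj ^^ Suc n) (restrict_Inl \<Phi>) t
        + (\<Sum>u<n. (m0_adj ^^ Suc u) (h_adj ((m1_adj ^^ (n - 1 - u)) (restrict_Inr \<Phi>))) t)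
        + h_adj ((m1_adj ^^ n) (restrict_Inr \<Phi>)) t"
      by (simp add: ctilde_adj_add ctilde_adj_sum)
    also have "\<dots> = (m0_adj ^^ Suc n) (restrict_Inl \<Phi>) t
        + (\<Sum>u<Suc n. (m0_adj ^^ u) (h_adj ((m1_adj ^^ (Suc n - 1 - u)) (restrict_Inr \<Phi>))) t)"
      by (simp only: sum.lessThan_Suc_shift) (simp add: algebra_simps del: sum.lessThan_Suc)
    finally show "restrict_Inl ((cone.Madj ^^ Suc n) \<Phi>) t = (m0_adj ^^ Suc n) (restrict_Inl \<Phi>) t
        + (\<Sum>u<Suc n. (m0_adj ^^ u) (h_adj ((m1_adj ^^ (Suc n - 1 - u)) (restrict_Inr \<Phi>))) t)" .
  qed
qed simp

lemma restrict_nu_at: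
  "restrict_Inl (nu_at nu (Inl x')) = nu_at nu x'" "restrict_Inr (nu_at nu (Inl x')) = (\<lambda>t. 0)"
  "restrict_Inl (nu_at nu (Inr y)) = (\<lambda>t. 0)" "restrict_Inr (nu_at nu (Inr y)) = nu_at nu y"
  by (auto simp: restrict_Inl_def restrict_Inr_def nu_at_def split: prod.splits)

lemma vanishes_below_m1_adj_pow:
  "vanishes_below gA C1 (\<lambda>z. int (ind1 z) + 0 - int k) ((m1_adj ^^ k) (nu_at nu y))"
  by (rule vanishes_below_ctilde_adj_pow) (auto intro: m1_deg vanishes_below_nu_at)

lemma vanishes_below_m0_adj_pow:
  "vanishes_below gA C0 (\<lambda>z. int (ind0 z) + \<beta>) \<Phi>
   \<Longrightarrow> vanishes_below gA C0 (\<lambda>z. int (ind0 z) + \<beta> - int k) ((m0_adj ^^ k) \<Phi>)"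
  by (rule vanishes_below_ctilde_adj_pow) (auto intro: m0_deg)

lemma vanishes_below_h_adj:
  "vanishes_below gA C1 (\<lambda>z. int (ind1 z) + 0 - int k) \<Psi>
   \<Longrightarrow> vanishes_below gA C0 (\<lambda>z. int (ind0 z) + (1 - int k)) (h_adj \<Psi>)"
  by (rule vanishes_below_ctilde_adj) (auto intro: h_deg)

lemma vanishes_below_tau_adj:
  "tau_family gA dA mul C0 ind0 m0 C1 ind1 m1 t \<Longrightarrow> vanishes_below gA C1 (\<lambda>z. int (ind1 z) + 0 - int k) \<Psi>
   \<Longrightarrow> vanishes_below gA C0 (\<lambda>z. int (ind0 z) + (0 - int k)) (tau_adj t \<Psi>)"
  by (rule vanishes_below_ctilde_adj) (auto intro: tau_family_deg)

lemma m0_adj_pow_vanishes: "x \<in> C0 \<Longrightarrow> cone_bound < n \<Longrightarrow> (m0_adj ^^ n) (nu_at nu x') ((a, p), [], x) = 0"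
  using ind0_le_cone_bound[of x]
  by (intro vanishes_below_empty[OF vanishes_below_m0_adj_pow[of 0]]) (auto intro: vanishes_below_nu_at)

lemma m1_adj_pow_vanishes: "w \<in> C1 \<Longrightarrow> cone_bound < n \<Longrightarrow> (m1_adj ^^ n) (nu_at nu y) ((a, p), [], w) = 0"
  using ind1_le_cone_bound[of w] by (intro vanishes_below_empty[OF vanishes_below_m1_adj_pow]) auto

lemma h_term_vanishes:
  "x \<in> C0 \<Longrightarrow> cone_bound < u + k + 1 \<Longrightarrow> (m0_adj ^^ u) (h_adj ((m1_adj ^^ k) (nu_at nu y))) ((a, p), [], x) = 0"
  using ind0_le_cone_bound[of x]
  by (intro vanishes_below_empty[OF vanishes_below_m0_adj_pow[OF vanishes_below_h_adj[OF vanishes_below_m1_adj_pow]]])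
    auto

lemma tau_term_vanishes:
  "tau_family gA dA mul C0 ind0 m0 C1 ind1 m1 t \<Longrightarrow> x \<in> C0 \<Longrightarrow> cone_bound < i + j + 1 \<Longrightarrow>
   (m0_adj ^^ i) (tau_adj t ((m1_adj ^^ j) (nu_at nu y))) ((a, p), [], x) = 0"
  using ind0_le_cone_bound[of x]
  by (intro vanishes_below_empty[OF vanishes_below_m0_adj_pow[OF vanishes_below_tau_adj[OF _ vanishes_below_m1_adj_pow]]])
    auto

lemma Madj_pow_at_Inl: "(cone.Madj ^^ n) \<Phi> (ap, gs, Inl x) = restrict_Inl ((cone.Madj ^^ n) \<Phi>) (ap, gs, x)"
  by (simp add: restrict_Inl_def)

lemma Madj_pow_at_Inr: "(cone.Madj ^^ n) \<Phi> (ap, gs, Inr y) = restrict_Inr ((cone.Madj ^^ n) \<Phi>) (ap, gs, y)"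
  by (simp add: restrict_Inr_def)

lemma cone_coeff_Inl_Inl:
  assumes "x \<in> C0"
  shows "cone.twisted_coeff a p (Inl x) (Inl x') = d0_coeff a p x x'"
proof -
  have "cone.twisted_coeff a p (Inl x) (Inl x') = (\<Sum>n\<le>cone_bound. (m0_adj ^^ n) (nu_at nu x') ((a, p), [], x))"
    unfolding cone.twisted_coeff_def Madj_pow_at_Inl restrict_Inl_Madj_pow[OF slot_additive_nu_at] restrict_nu_at
      ctilde_adj_pow_zero ctilde_adj_zero by simp
  also have "\<dots> = d0_coeff a p x x'"
    unfolding d0_coeff_def using assms by (intro fsum_eq_sum_atMost[symmetric] m0_adj_pow_vanishes)
  finally show ?thesis .
qed

lemma cone_coeff_Inr_Inr:
  assumes "w \<in> C1"
  shows "cone.twisted_coeff b q (Inr w) (Inr y) = d1_coeff b q w y"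
proof -
  have "cone.twisted_coeff b q (Inr w) (Inr y) = (\<Sum>n\<le>cone_bound. (m1_adj ^^ n) (nu_at nu y) ((b, q), [], w))"
    unfolding cone.twisted_coeff_def Madj_pow_at_Inr restrict_Inr_Madj_pow[OF slot_additive_nu_at] restrict_nu_at ..
  also have "\<dots> = d1_coeff b q w y"
    unfolding d1_coeff_def using assms by (intro fsum_eq_sum_atMost[symmetric] m1_adj_pow_vanishes)
  finally show ?thesis .
qed

lemma cone_coeff_Inl_Inr:
  assumes "x \<in> C0"
  shows "cone.twisted_coeff a p (Inl x) (Inr y) = H_coeff a p x y"
proof -
  let ?T = "\<lambda>u k. (m0_adj ^^ u) (h_adj ((m1_adj ^^ k) (nu_at nu y))) ((a, p), [], x)"
  have "cone.twisted_coeff a p (Inl x) (Inr y) = (\<Sum>n\<le>cone_bound. \<Sum>u<n. ?T u (n - 1 - u))"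
    unfolding cone.twisted_coeff_def Madj_pow_at_Inl restrict_Inl_Madj_pow[OF slot_additive_nu_at] restrict_nu_at
      ctilde_adj_pow_zero by simp
  also have "\<dots> = (\<Sum>n\<le>cone_bound. \<Sum>u\<in>{1..n}. ?T (u - 1) (n - u))"
    by (rule sum.cong[OF refl], rule sum.reindex_bij_witness[where i = "\<lambda>u. u - 1" and j = "\<lambda>u. u + 1"]) auto
  also have "\<dots> = H_coeff a p x y"
    unfolding H_coeff_def using assms by (intro fsum_eq_sum_atMost[symmetric] sum.neutral ballI h_term_vanishes) auto
  finally show ?thesis .
qed

lemma cone_curvature_Inl_Inl: "x \<in> C0 \<Longrightarrow> x' \<in> C0 \<Longrightarrow> cone.curvature (Inl x) (Inl x') = 0"
  using m0 by (simp add: cone.curvature_def sum_cone_crit mul_zero_right twisting_cocycle_def)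

lemma cone_curvature_Inl_Inr: "x \<in> C0 \<Longrightarrow> y \<in> C1 \<Longrightarrow> cone.curvature (Inl x) (Inr y) = tau x y - tau' x y"
proof -
  assume x: "x \<in> C0" and y: "y \<in> C1"
  have s: "sgnz (int (ind0 x) + 2 - int (ind1 w)) v = sgnz (int (ind0 x) - int (ind1 w)) v" for w and v :: 'a
    by (rule sgnz_cong_even) simp_all
  have "dA (h x y) = tau x y - tau' x y
        + (\<Sum>z\<in>C0. sgnz (int (ind0 x) - int (ind0 z)) (mul (m0 x z) (h z y)))
        + (\<Sum>w\<in>C1. sgnz (int (ind0 x) - int (ind1 w)) (mul (h x w) (m1 w y)))"
    using h x y by (simp add: homotopy_family_def)
  then show ?thesis by (simp add: cone.curvature_def sum_cone_crit s)
qed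

lemma cone_curvature_Inr: "y \<in> C1 \<Longrightarrow> v \<in> cone_crit \<Longrightarrow> cone.curvature (Inr y) v = 0"
  using m1 by (cases v) (auto simp: cone.curvature_def sum_cone_crit mul_zero_left mul_zero_right dA_zero
      twisting_cocycle_def)

lemma restrict_Inl_curvature_adj:
  assumes "slot_additive \<Psi>" and "x \<in> C0"
  shows "restrict_Inl (curvature_adj \<Psi>) (ap, gs, x)
       = tau_adj tau (restrict_Inr \<Psi>) (ap, gs, x) - tau_adj tau' (restrict_Inr \<Psi>) (ap, gs, x)"
  using assms
  by (simp add: restrict_Inl_def restrict_Inr_def ctilde_adj_simp sum_cone_crit cone_curvature_Inl_Inl
      cone_curvature_Inl_Inr cone.label_deg_def slot_additive_zero_last slot_additive_diff_last sum_subtractf)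

lemma restrict_Inr_curvature_adj:
  assumes "slot_additive \<Psi>" and "y \<in> C1"
  shows "restrict_Inr (curvature_adj \<Psi>) (ap, gs, y) = 0"
  unfolding restrict_Inr_def ctilde_adj_simp prod.case
  using assms by (intro sum.neutral) (simp add: cone_curvature_Inr slot_additive_zero_last)

definition psi_term where
  "psi_term t a p x y i j = (m0_adj ^^ i) (tau_adj t ((m1_adj ^^ j) (nu_at nu y))) ((a, p), [], x)"

lemma cone_curvature_insertion:
  assumes x: "x \<in> C0" and y: "y \<in> C1"
  shows "(cone.Madj ^^ i) (curvature_adj ((cone.Madj ^^ j) (nu_at nu (Inr y)))) ((a, p), [], Inl x)
       = psi_term tau a p x y i j - psi_term tau' a p x y i j"
proof -
  let ?\<Psi> = "(cone.Madj ^^ j) (nu_at nu (Inr y))"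
  have add_\<Psi>: "slot_additive ?\<Psi>" by (rule slot_additive_ctilde_adj_pow[OF slot_additive_nu_at])
  have add_curv: "slot_additive (curvature_adj ?\<Psi>)" by (rule slot_additive_ctilde_adj[OF add_\<Psi>])
  have restr_\<Psi>: "restrict_Inr ?\<Psi> = (m1_adj ^^ j) (nu_at nu y)"
    unfolding restrict_Inr_Madj_pow[OF slot_additive_nu_at] restrict_nu_at ..
  have "h_adj ((m1_adj ^^ k) (restrict_Inr (curvature_adj ?\<Psi>))) = h_adj ((m1_adj ^^ k) (\<lambda>t. 0))" for k
    by (rule ctilde_adj_cong, rule ctilde_adj_pow_cong) (auto simp: restrict_Inr_curvature_adj[OF add_\<Psi>])
  then have no_h: "h_adj ((m1_adj ^^ k) (restrict_Inr (curvature_adj ?\<Psi>))) = (\<lambda>t. 0)" for k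
    by (simp add: ctilde_adj_pow_zero ctilde_adj_zero)
  have "(cone.Madj ^^ i) (curvature_adj ?\<Psi>) ((a, p), [], Inl x)
      = (m0_adj ^^ i) (restrict_Inl (curvature_adj ?\<Psi>)) ((a, p), [], x)"
    unfolding Madj_pow_at_Inl restrict_Inl_Madj_pow[OF add_curv] no_h ctilde_adj_pow_zero by simp
  also have "\<dots> = (m0_adj ^^ i) (\<lambda>t. tau_adj tau (restrict_Inr ?\<Psi>) t - tau_adj tau' (restrict_Inr ?\<Psi>) t)
      ((a, p), [], x)"
    by (rule ctilde_adj_pow_cong) (auto simp: restrict_Inl_curvature_adj[OF add_\<Psi>] x)
  also have "\<dots> = psi_term tau a p x y i j - psi_term tau' a p x y i j"
    unfolding ctilde_adj_pow_diff restr_\<Psi> psi_term_def ..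
  finally show ?thesis .
qed

lemma Psi_coeff_eq:
  assumes t: "tau_family gA dA mul C0 ind0 m0 C1 ind1 m1 t" and x: "x \<in> C0"
  shows "Psi_coeff t a p x y = (\<Sum>i\<le>cone_bound. \<Sum>j\<le>cone_bound. sgnz (int i) (psi_term t a p x y i j))"
proof -
  have "Psi_coeff t a p x y = fsum (\<lambda>n. \<Sum>u\<in>{1..n}. sgnz (int (u - 1)) (psi_term t a p x y (u - 1) (n - u)))"
    unfolding Psi_coeff_def psi_term_def
    by (rule arg_cong[where f = fsum], rule ext, rule sum.cong[OF refl]) (simp add: of_nat_diff)
  also have "\<dots> = (\<Sum>n\<le>cone_bound. \<Sum>u\<in>{1..n}. sgnz (int (u - 1)) (psi_term t a p x y (u - 1) (n - u)))"
    by (rule fsum_eq_sum_atMost, rule sum.neutral) (auto simp: psi_term_def tau_term_vanishes[OF t x])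
  also have "\<dots> = (\<Sum>i\<le>cone_bound. \<Sum>j\<le>cone_bound. sgnz (int i) (psi_term t a p x y i j))"
    by (rule sum_antidiagonals) (simp add: psi_term_def tau_term_vanishes[OF t x])
  finally show ?thesis .
qed

lemma homotopy_identity_at:
  assumes a: "a \<in> gF p" and x: "x \<in> C0" and y: "y \<in> C1"
  shows "(\<Sum>x'\<in>C0. H_coeff (d0_coeff a p x x') (p + int (ind0 x) - int (ind0 x') - 1) x' y)
       + (\<Sum>w\<in>C1. d1_coeff (H_coeff a p x w) (p + int (ind0 x) + 1 - int (ind1 w)) w y)
       = Psi_coeff tau a p x y - Psi_coeff tau' a p x y"
proof -
  have "(\<Sum>x'\<in>C0. H_coeff (d0_coeff a p x x') (p + int (ind0 x) - int (ind0 x') - 1) x' y)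
       + (\<Sum>w\<in>C1. d1_coeff (H_coeff a p x w) (p + int (ind0 x) + 1 - int (ind1 w)) w y)
     = (\<Sum>v\<in>cone_crit. cone.twisted_coeff (cone.twisted_coeff a p (Inl x) v)
         (p + cone_ind (Inl x) - cone_ind v - 1) v (Inr y))"
    unfolding sum_cone_crit using x
    by (intro arg_cong2[where f = "(+)"] sum.cong refl)
      (simp_all add: cone_coeff_Inl_Inl cone_coeff_Inl_Inr cone_coeff_Inr_Inr algebra_simps)
  also have "\<dots> = (\<Sum>i\<le>cone_bound. \<Sum>j\<le>cone_bound. sgnz (int i)
      ((cone.Madj ^^ i) (curvature_adj ((cone.Madj ^^ j) (nu_at nu (Inr y)))) ((a, p), [], Inl x)))"
    using x by (intro cone.twisted_square_eq_curvature_insertions[OF a]) simp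
  also have "\<dots> = Psi_coeff tau a p x y - Psi_coeff tau' a p x y"
    by (simp add: cone_curvature_insertion[OF x y] Psi_coeff_eq[OF tau x] Psi_coeff_eq[OF tau' x]
        sgnz_diff sum_subtractf)
  finally show ?thesis .
qed

lemma d1_coeff_sum: "w \<in> C1 \<Longrightarrow> d1_coeff (\<Sum>i\<in>I. f i) q w y = (\<Sum>i\<in>I. d1_coeff (f i) q w y)"
  using cone.twisted_coeff_sum[of f I q "Inr w" "Inr y"] by (simp add: cone_coeff_Inr_Inr)

lemma H_coeff_sum: "x \<in> C0 \<Longrightarrow> H_coeff (\<Sum>i\<in>I. f i) q x y = (\<Sum>i\<in>I. H_coeff (f i) q x y)"
  using cone.twisted_coeff_sum[of f I q "Inl x" "Inr y"] by (simp add: cone_coeff_Inl_Inr)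

lemma H_map_chain_el:
  assumes phi: "chain_el gF C0 ind0 N phi"
  shows "chain_el gF C1 ind1 (N + 1) (H_map nu C0 ind0 m0 C1 ind1 m1 h N phi)"
  unfolding chain_el_def
proof
  fix y assume y: "y \<in> C1"
  have "H_coeff (phi x) (N - int (ind0 x)) x y \<in> gF (N + 1 - int (ind1 y))" if x: "x \<in> C0" for x
    using cone.twisted_coeff_deg[of "phi x" "N - int (ind0 x)" "Inl x" "Inr y"] phi x
    by (simp add: cone_coeff_Inl_Inr chain_el_def algebra_simps)
  then show "H_map nu C0 ind0 m0 C1 ind1 m1 h N phi y \<in> gF (N + 1 - int (ind1 y))"
    unfolding H_map_eq by (intro graded_group_sum[OF graded_gF])
qed

lemma twisted_diff_H_map:
  "twisted_diff nu C1 ind1 m1 (N + 1) (H_map nu C0 ind0 m0 C1 ind1 m1 h N phi) y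
   = (\<Sum>x\<in>C0. \<Sum>w\<in>C1. d1_coeff (H_coeff (phi x) (N - int (ind0 x)) x w) (N + 1 - int (ind1 w)) w y)"
proof -
  have "twisted_diff nu C1 ind1 m1 (N + 1) (H_map nu C0 ind0 m0 C1 ind1 m1 h N phi) y
      = (\<Sum>w\<in>C1. \<Sum>x\<in>C0. d1_coeff (H_coeff (phi x) (N - int (ind0 x)) x w) (N + 1 - int (ind1 w)) w y)"
    unfolding twisted_diff1_eq H_map_eq by (intro sum.cong refl) (simp add: d1_coeff_sum)
  then show ?thesis by (simp only: sum.swap[of _ C1])
qed

lemma H_map_twisted_diff:
  "H_map nu C0 ind0 m0 C1 ind1 m1 h (N - 1) (twisted_diff nu C0 ind0 m0 N phi) y
   = (\<Sum>x\<in>C0. \<Sum>x'\<in>C0. H_coeff (d0_coeff (phi x) (N - int (ind0 x)) x x') (N - 1 - int (ind0 x')) x' y)"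
proof -
  have "H_map nu C0 ind0 m0 C1 ind1 m1 h (N - 1) (twisted_diff nu C0 ind0 m0 N phi) y
      = (\<Sum>x'\<in>C0. \<Sum>x\<in>C0. H_coeff (d0_coeff (phi x) (N - int (ind0 x)) x x') (N - 1 - int (ind0 x')) x' y)"
    unfolding twisted_diff0_eq H_map_eq by (intro sum.cong refl) (simp add: H_coeff_sum)
  then show ?thesis by (subst sum.swap) simp
qed

lemma homotopy_equation:
  assumes phi: "chain_el gF C0 ind0 N phi" and y: "y \<in> C1"
  shows "Psi_map nu C0 ind0 m0 C1 ind1 m1 tau N phi y - Psi_map nu C0 ind0 m0 C1 ind1 m1 tau' N phi y
    = twisted_diff nu C1 ind1 m1 (N + 1) (H_map nu C0 ind0 m0 C1 ind1 m1 h N phi) y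
      + H_map nu C0 ind0 m0 C1 ind1 m1 h (N - 1) (twisted_diff nu C0 ind0 m0 N phi) y"
  unfolding twisted_diff_H_map H_map_twisted_diff Psi_map_eq sum_subtractf[symmetric] sum.distrib[symmetric]
proof (rule sum.cong[OF refl])
  fix x assume x: "x \<in> C0"
  then have "phi x \<in> gF (N - int (ind0 x))" using phi by (simp add: chain_el_def)
  from homotopy_identity_at[OF this x y] show "Psi_coeff tau (phi x) (N - int (ind0 x)) x y
      - Psi_coeff tau' (phi x) (N - int (ind0 x)) x y
    = (\<Sum>w\<in>C1. d1_coeff (H_coeff (phi x) (N - int (ind0 x)) x w) (N + 1 - int (ind1 w)) w y)
      + (\<Sum>x'\<in>C0. H_coeff (d0_coeff (phi x) (N - int (ind0 x)) x x') (N - 1 - int (ind0 x')) x' y)"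
    by (simp add: algebra_simps)
qed

end

theorem proposition4p11:
  fixes gA :: "int \<Rightarrow> 'a::ab_group_add set" and dA :: "'a \<Rightarrow> 'a" and mul :: "'a \<Rightarrow> 'a \<Rightarrow> 'a"
    and gF :: "int \<Rightarrow> 'f::ab_group_add set" and nu :: "nat \<Rightarrow> 'f \<Rightarrow> 'a list \<Rightarrow> 'f"
    and C0 :: "'c::linorder set" and ind0 :: "'c \<Rightarrow> nat" and m0 :: "'c \<Rightarrow> 'c \<Rightarrow> 'a"
    and C1 :: "'d::linorder set" and ind1 :: "'d \<Rightarrow> nat" and m1 :: "'d \<Rightarrow> 'd \<Rightarrow> 'a"
    and tau tau' h :: "'c \<Rightarrow> 'd \<Rightarrow> 'a"
  assumes alg: "ainf_alg gA dA mul"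
    and nonneg: "\<And>q. q < 0 \<Longrightarrow> gA q = {0}"
    and module: "ainf_module gA dA mul gF nu"
    and fin0: "finite C0" and fin1: "finite C1"
    and m0: "twisting_cocycle gA dA mul C0 ind0 m0"
    and m1: "twisting_cocycle gA dA mul C1 ind1 m1"
    and tau: "tau_family gA dA mul C0 ind0 m0 C1 ind1 m1 tau"
    and tau': "tau_family gA dA mul C0 ind0 m0 C1 ind1 m1 tau'"
    and h: "homotopy_family gA dA mul C0 ind0 m0 C1 ind1 m1 tau tau' h"
  shows "chain_homotopy gF C0 ind0 C1 ind1
           (twisted_diff nu C0 ind0 m0) (twisted_diff nu C1 ind1 m1)
           (Psi_map nu C0 ind0 m0 C1 ind1 m1 tau) (Psi_map nu C0 ind0 m0 C1 ind1 m1 tau')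
           (H_map nu C0 ind0 m0 C1 ind1 m1 h)"
proof -
  interpret homotopy_data gA dA mul gF nu C0 ind0 m0 C1 ind1 m1 tau tau' h
    by unfold_locales (fact assms)+
  show ?thesis
    unfolding chain_homotopy_def using H_map_chain_el homotopy_equation by blast
qed

end
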